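(* Let $\pi:\mathcal{B}(\ell^2)\to\mathcal{C}(\ell^2)$ be the natural quotient map onto the Calkin algebra, and let $P,Q\in\mathcal{B}(\ell^2)$ be orthogonal projections. Then $\pi(P)\le\pi(Q)$ if and only if $\mathrm{ran}(P)$ is essentially contained in $\mathrm{ran}(Q)$.
   Context: $\ell^2$ is the complex separable infinite-dimensional Hilbert space, $\mathcal{B}(\ell^2)$ the bounded operators, $\mathcal{K}(\ell^2)$ the compact operators, $\mathcal{C}(\ell^2)=\mathcal{B}(\ell^2)/\mathcal{K}(\ell^2)$ the Calkin algebra. For self-adjoint elements $a,b$ of a C*-algebra, $a\le b$ means $b-a$ is positive (i.e. $b-a=c^*c$ for some $c$ in the algebra). For closed subspaces $E,F$ of $\ell^2$, $E$ is essentially contained in $F$ if for every $\epsilon>0$ there is a closed subspace $E_0\subseteq E$ of finite codimension in $E$ such that every unit vector $v\in E_0$ satisfies $d(v,F)\le\epsilon$, where $d(v,F)$ is the distance from $v$ to $F$. *)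

theory Defs
  imports "HOL-Analysis.Analysis"
begin

text \<open>Operators are functions on
  nat => complex; only their behaviour on the carrier ell2 matters.\<close>

type_synonym vec = "nat \<Rightarrow> complex"

definition ell2 :: "vec set" where
  "ell2 = {x. summable (\<lambda>n. (cmod (x n))\<^sup>2)}"

definition l2inner :: "vec \<Rightarrow> vec \<Rightarrow> complex" where
  "l2inner x y = (\<Sum>n. cnj (x n) * y n)"

definition l2norm :: "vec \<Rightarrow> real" where
  "l2norm x = sqrt (\<Sum>n. (cmod (x n))\<^sup>2)"

definition vadd :: "vec \<Rightarrow> vec \<Rightarrow> vec" where
  "vadd x y = (\<lambda>n. x n + y n)"

definition vsub :: "vec \<Rightarrow> vec \<Rightarrow> vec" where
  "vsub x y = (\<lambda>n. x n - y n)"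

definition vscale :: "complex \<Rightarrow> vec \<Rightarrow> vec" where
  "vscale a x = (\<lambda>n. a * x n)"

definition bounded_op :: "(vec \<Rightarrow> vec) \<Rightarrow> bool" where
  "bounded_op T \<longleftrightarrow>
     (\<forall>x\<in>ell2. T x \<in> ell2) \<and>
     (\<forall>x\<in>ell2. \<forall>y\<in>ell2. \<forall>a b. T (vadd (vscale a x) (vscale b y)) = vadd (vscale a (T x)) (vscale b (T y))) \<and>
     (\<exists>K. \<forall>x\<in>ell2. l2norm (T x) \<le> K * l2norm x)"

definition compact_op :: "(vec \<Rightarrow> vec) \<Rightarrow> bool" where
  "compact_op T \<longleftrightarrow> bounded_op T \<and>
     (\<forall>xs::nat \<Rightarrow> vec. (\<forall>k. xs k \<in> ell2 \<and> l2norm (xs k) \<le> 1) \<longrightarrow>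
        (\<exists>r y. strict_mono r \<and> y \<in> ell2 \<and>
               (\<lambda>k. l2norm (vsub (T (xs (r k))) y)) \<longlonglongrightarrow> 0))"

definition adjoint_of :: "(vec \<Rightarrow> vec) \<Rightarrow> (vec \<Rightarrow> vec) \<Rightarrow> bool" where
  "adjoint_of S T \<longleftrightarrow> (\<forall>x\<in>ell2. \<forall>y\<in>ell2. l2inner (T x) y = l2inner x (S y))"

definition orth_proj :: "(vec \<Rightarrow> vec) \<Rightarrow> bool" where
  "orth_proj P \<longleftrightarrow> bounded_op P \<and> (\<forall>x\<in>ell2. P (P x) = P x) \<and> adjoint_of P P"

text \<open>Order in the Calkin algebra: pi(A) \<le> pi(B) iff pi(B) - pi(A) = c* c for some c
  in the Calkin algebra.  Since pi is surjective with pi(C)* = pi(C*), this says: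
  there is a bounded C (with adjoint Cs) such that B - A - C* C is compact.\<close>
definition calkin_le :: "(vec \<Rightarrow> vec) \<Rightarrow> (vec \<Rightarrow> vec) \<Rightarrow> bool" where
  "calkin_le A B \<longleftrightarrow> (\<exists>C Cs. bounded_op C \<and> bounded_op Cs \<and> adjoint_of Cs C \<and>
      compact_op (\<lambda>x. vsub (vsub (B x) (A x)) (Cs (C x))))"

definition closed_subspace :: "vec set \<Rightarrow> bool" where
  "closed_subspace E \<longleftrightarrow> E \<subseteq> ell2 \<and> (\<lambda>n. 0) \<in> E \<and>
     (\<forall>x\<in>E. \<forall>y\<in>E. \<forall>a b. vadd (vscale a x) (vscale b y) \<in> E) \<and>
     (\<forall>xs x. (\<forall>k. xs k \<in> E) \<and> x \<in> ell2 \<and> (\<lambda>k. l2norm (vsub (xs k) x)) \<longlonglongrightarrow> 0 \<longrightarrow> x \<in> E)"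

definition lspan :: "vec set \<Rightarrow> vec set" where
  "lspan S = {(\<lambda>n. \<Sum>s\<in>S. c s * s n) | c. True}"

definition fin_codim_in :: "vec set \<Rightarrow> vec set \<Rightarrow> bool" where
  "fin_codim_in E0 E \<longleftrightarrow> (\<exists>S. finite S \<and> S \<subseteq> E \<and>
      E = {vadd x y | x y. x \<in> E0 \<and> y \<in> lspan S})"

definition l2dist :: "vec \<Rightarrow> vec set \<Rightarrow> real" where
  "l2dist v F = Inf {l2norm (vsub v w) | w. w \<in> F}"

definition ess_contained :: "vec set \<Rightarrow> vec set \<Rightarrow> bool" where
  "ess_contained E F \<longleftrightarrow> (\<forall>\<epsilon>>0. \<exists>E0. closed_subspace E0 \<and> E0 \<subseteq> E \<and> fin_codim_in E0 E \<and>
      (\<forall>v\<in>E0. l2norm v = 1 \<longrightarrow> l2dist v F \<le> \<epsilon>))"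

end

theory Submission
  imports Defs "HOL-Library.Diagonal_Subsequence"
begin

definition l2normsq :: "vec \<Rightarrow> real" where
  "l2normsq x = (\<Sum>n. (cmod (x n))\<^sup>2)"

lemma l2norm_eq_sqrt: "l2norm x = sqrt (l2normsq x)"
  by (simp add: l2norm_def l2normsq_def)

lemma mem_ell2_iff: "x \<in> ell2 \<longleftrightarrow> summable (\<lambda>n. (cmod (x n))\<^sup>2)"
  by (simp add: ell2_def)

lemma l2normsq_nonneg: "x \<in> ell2 \<Longrightarrow> 0 \<le> l2normsq x"
  unfolding l2normsq_def mem_ell2_iff by (simp add: suminf_nonneg)

lemma l2norm_nonneg: "x \<in> ell2 \<Longrightarrow> 0 \<le> l2norm x"
  by (simp add: l2norm_eq_sqrt l2normsq_nonneg)

lemma l2norm_squared: "x \<in> ell2 \<Longrightarrow> (l2norm x)\<^sup>2 = l2normsq x"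
  by (simp add: l2norm_eq_sqrt l2normsq_nonneg)

lemma l2norm_zero [simp]: "l2norm (\<lambda>n. 0) = 0"
  by (simp add: l2norm_def)

lemma l2normsq_eq_0_iff: "x \<in> ell2 \<Longrightarrow> l2normsq x = 0 \<longleftrightarrow> x = (\<lambda>n. 0)"
  unfolding l2normsq_def mem_ell2_iff by (subst suminf_eq_zero_iff) (auto simp: fun_eq_iff)

lemma l2norm_eq_0_iff: "x \<in> ell2 \<Longrightarrow> l2norm x = 0 \<longleftrightarrow> x = (\<lambda>n. 0)"
  by (simp add: l2norm_eq_sqrt l2normsq_eq_0_iff)

lemma L2_set_le_l2norm:
  assumes "x \<in> ell2"
  shows "L2_set (\<lambda>i. cmod (x i)) A \<le> l2norm x"
proof (cases "finite A")
  case True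
  have "(\<Sum>i\<in>A. (cmod (x i))\<^sup>2) \<le> l2normsq x"
    unfolding l2normsq_def by (rule sum_le_suminf) (use assms True in \<open>auto simp: mem_ell2_iff\<close>)
  then show ?thesis by (simp add: L2_set_def l2norm_eq_sqrt)
qed (simp add: l2norm_nonneg assms)

lemma norm_le_l2norm: "x \<in> ell2 \<Longrightarrow> cmod (x n) \<le> l2norm x"
  using L2_set_le_l2norm[of x "{n}"] by simp

lemma ell2_zero [simp]: "(\<lambda>n. 0) \<in> ell2"
  by (simp add: mem_ell2_iff)

lemma ell2_scale: "x \<in> ell2 \<Longrightarrow> vscale a x \<in> ell2"
  unfolding mem_ell2_iff vscale_def by (simp add: norm_mult power_mult_distrib summable_mult)

lemma l2normsq_scale: "x \<in> ell2 \<Longrightarrow> l2normsq (vscale a x) = (cmod a)\<^sup>2 * l2normsq x"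
  unfolding l2normsq_def vscale_def mem_ell2_iff by (simp add: norm_mult power_mult_distrib suminf_mult)

lemma l2norm_scale: "x \<in> ell2 \<Longrightarrow> l2norm (vscale a x) = cmod a * l2norm x"
  by (simp add: l2norm_eq_sqrt l2normsq_scale real_sqrt_mult)

lemma partial_sum_add_le:
  assumes "x \<in> ell2" "y \<in> ell2"
  shows "(\<Sum>i<n. (cmod (x i + y i))\<^sup>2) \<le> (l2norm x + l2norm y)\<^sup>2"
proof -
  have "L2_set (\<lambda>i. cmod (x i + y i)) {..<n} \<le> L2_set (\<lambda>i. cmod (x i) + cmod (y i)) {..<n}"
    by (rule L2_set_mono) (auto intro: norm_triangle_ineq)
  also have "\<dots> \<le> L2_set (\<lambda>i. cmod (x i)) {..<n} + L2_set (\<lambda>i. cmod (y i)) {..<n}"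
    by (rule L2_set_triangle_ineq)
  also have "\<dots> \<le> l2norm x + l2norm y"
    using assms by (intro add_mono L2_set_le_l2norm)
  finally have "sqrt (\<Sum>i<n. (cmod (x i + y i))\<^sup>2) \<le> l2norm x + l2norm y"
    by (simp add: L2_set_def)
  then show ?thesis
    by (rule sqrt_le_D)
qed

lemma ell2_add:
  assumes "x \<in> ell2" "y \<in> ell2"
  shows "vadd x y \<in> ell2"
  unfolding vadd_def mem_ell2_iff
  by (rule summableI_nonneg_bounded[where x="(l2norm x + l2norm y)\<^sup>2"])
    (simp, rule partial_sum_add_le[OF assms])

lemma l2norm_triangle:
  assumes "x \<in> ell2" "y \<in> ell2"
  shows "l2norm (vadd x y) \<le> l2norm x + l2norm y"
proof -
  have "l2normsq (vadd x y) \<le> (l2norm x + l2norm y)\<^sup>2"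
    unfolding l2normsq_def
    by (rule suminf_le_const)
      (use ell2_add[OF assms] partial_sum_add_le[OF assms] in \<open>simp_all add: mem_ell2_iff vadd_def\<close>)
  then have "l2norm (vadd x y) \<le> sqrt ((l2norm x + l2norm y)\<^sup>2)"
    unfolding l2norm_eq_sqrt by (rule real_sqrt_le_mono)
  then show ?thesis
    using l2norm_nonneg assms by simp
qed

lemma ell2_sub: "x \<in> ell2 \<Longrightarrow> y \<in> ell2 \<Longrightarrow> vsub x y \<in> ell2"
  using ell2_add[OF _ ell2_scale, of x y "-1"] by (simp add: vadd_def vscale_def vsub_def)

lemma ell2_sum: "finite S \<Longrightarrow> (\<And>s. s \<in> S \<Longrightarrow> f s \<in> ell2) \<Longrightarrow> (\<lambda>n. \<Sum>s\<in>S. f s n) \<in> ell2"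
proof (induction S rule: finite_induct)
  case (insert a S)
  then have "vadd (f a) (\<lambda>n. \<Sum>s\<in>S. f s n) \<in> ell2"
    by (simp add: ell2_add)
  with insert.hyps show ?case
    by (simp add: vadd_def)
qed simp

lemma partial_sum_norm_mult_le:
  assumes "x \<in> ell2" "y \<in> ell2"
  shows "(\<Sum>i<n. cmod (x i) * cmod (y i)) \<le> l2norm x * l2norm y"
proof -
  have "(\<Sum>i<n. cmod (x i) * cmod (y i)) \<le> L2_set (\<lambda>i. cmod (x i)) {..<n} * L2_set (\<lambda>i. cmod (y i)) {..<n}"
    using L2_set_mult_ineq[of "\<lambda>i. cmod (x i)" "\<lambda>i. cmod (y i)" "{..<n}"] by simp
  also have "\<dots> \<le> l2norm x * l2norm y"
    using assms by (intro mult_mono L2_set_le_l2norm l2norm_nonneg) auto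
  finally show ?thesis .
qed

lemma summable_norm_mult:
  assumes "x \<in> ell2" "y \<in> ell2"
  shows "summable (\<lambda>n. cmod (x n) * cmod (y n))"
  by (rule summableI_nonneg_bounded[where x="l2norm x * l2norm y"])
    (simp, rule partial_sum_norm_mult_le[OF assms])

lemma summable_l2inner: "x \<in> ell2 \<Longrightarrow> y \<in> ell2 \<Longrightarrow> summable (\<lambda>n. cnj (x n) * y n)"
  by (rule summable_norm_cancel) (simp add: norm_mult summable_norm_mult)

lemma l2inner_cauchy_schwarz:
  assumes "x \<in> ell2" "y \<in> ell2"
  shows "cmod (l2inner x y) \<le> l2norm x * l2norm y"
proof -
  have "cmod (l2inner x y) \<le> (\<Sum>n. cmod (cnj (x n) * y n))"
    unfolding l2inner_def by (rule summable_norm) (simp add: norm_mult summable_norm_mult assms)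
  also have "\<dots> = (\<Sum>n. cmod (x n) * cmod (y n))"
    by (simp add: norm_mult)
  also have "\<dots> \<le> l2norm x * l2norm y"
    by (rule suminf_le_const[OF summable_norm_mult[OF assms] partial_sum_norm_mult_le[OF assms]])
  finally show ?thesis .
qed

lemma l2inner_self:
  assumes "x \<in> ell2"
  shows "l2inner x x = complex_of_real (l2normsq x)"
proof -
  have "cnj (x n) * x n = complex_of_real ((cmod (x n))\<^sup>2)" for n
    by (metis complex_norm_square mult.commute)
  then show ?thesis
    using assms by (simp add: l2inner_def l2normsq_def mem_ell2_iff suminf_of_real)
qed

lemma l2inner_commute: "x \<in> ell2 \<Longrightarrow> y \<in> ell2 \<Longrightarrow> l2inner y x = cnj (l2inner x y)"
  unfolding l2inner_def
  by (subst bounded_linear.suminf[OF bounded_linear_cnj summable_l2inner]) (simp_all add: mult.commute)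

lemma l2inner_add_right:
  "x \<in> ell2 \<Longrightarrow> y \<in> ell2 \<Longrightarrow> z \<in> ell2 \<Longrightarrow> l2inner x (vadd y z) = l2inner x y + l2inner x z"
  unfolding l2inner_def vadd_def by (simp add: distrib_left suminf_add summable_l2inner)

lemma l2inner_add_left:
  "x \<in> ell2 \<Longrightarrow> y \<in> ell2 \<Longrightarrow> z \<in> ell2 \<Longrightarrow> l2inner (vadd x y) z = l2inner x z + l2inner y z"
  unfolding l2inner_def vadd_def by (simp add: distrib_right suminf_add summable_l2inner)

lemma l2inner_diff_right:
  "x \<in> ell2 \<Longrightarrow> y \<in> ell2 \<Longrightarrow> z \<in> ell2 \<Longrightarrow> l2inner x (vsub y z) = l2inner x y - l2inner x z"
  unfolding l2inner_def vsub_def by (simp add: right_diff_distrib suminf_diff summable_l2inner)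

lemma l2inner_diff_left:
  "x \<in> ell2 \<Longrightarrow> y \<in> ell2 \<Longrightarrow> z \<in> ell2 \<Longrightarrow> l2inner (vsub x y) z = l2inner x z - l2inner y z"
  unfolding l2inner_def vsub_def by (simp add: left_diff_distrib suminf_diff summable_l2inner)

lemma l2inner_scale_right: "x \<in> ell2 \<Longrightarrow> y \<in> ell2 \<Longrightarrow> l2inner x (vscale a y) = a * l2inner x y"
  unfolding l2inner_def vscale_def
  by (subst suminf_mult[OF summable_l2inner, symmetric]) (simp_all add: algebra_simps)

lemma l2inner_scale_left: "x \<in> ell2 \<Longrightarrow> y \<in> ell2 \<Longrightarrow> l2inner (vscale a x) y = cnj a * l2inner x y"
  unfolding l2inner_def vscale_def
  by (subst suminf_mult[OF summable_l2inner, symmetric]) (simp_all add: algebra_simps)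

lemma l2inner_zero_left [simp]: "l2inner (\<lambda>n. 0) y = 0"
  by (simp add: l2inner_def)

lemma l2inner_zero_right [simp]: "l2inner x (\<lambda>n. 0) = 0"
  by (simp add: l2inner_def)

lemma l2normsq_add:
  assumes "x \<in> ell2" "y \<in> ell2"
  shows "l2normsq (vadd x y) = l2normsq x + l2normsq y + 2 * Re (l2inner x y)"
proof -
  have "complex_of_real (l2normsq (vadd x y)) = l2inner (vadd x y) (vadd x y)"
    using l2inner_self[OF ell2_add[OF assms]] by simp
  also have "\<dots> = l2inner x x + l2inner y y + (l2inner x y + l2inner y x)"
    using assms by (simp add: l2inner_add_left l2inner_add_right ell2_add)
  also have "\<dots> = complex_of_real (l2normsq x) + complex_of_real (l2normsq y) + (l2inner x y + cnj (l2inner x y))"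
    using assms by (simp add: l2inner_self l2inner_commute[of x y])
  also have "l2inner x y + cnj (l2inner x y) = complex_of_real (2 * Re (l2inner x y))"
    by (simp add: complex_add_cnj)
  finally show ?thesis
    by (metis of_real_add of_real_eq_iff)
qed

lemma l2normsq_diff:
  assumes "x \<in> ell2" "y \<in> ell2"
  shows "l2normsq (vsub x y) = l2normsq x + l2normsq y - 2 * Re (l2inner x y)"
proof -
  have "vsub x y = vadd x (vscale (-1) y)"
    by (simp add: vadd_def vscale_def vsub_def)
  then show ?thesis
    using assms by (simp add: l2normsq_add ell2_scale l2normsq_scale l2inner_scale_right)
qed

lemma pythagoras: "x \<in> ell2 \<Longrightarrow> y \<in> ell2 \<Longrightarrow> l2inner x y = 0 \<Longrightarrow> l2normsq (vadd x y) = l2normsq x + l2normsq y"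
  by (simp add: l2normsq_add)

lemma parallelogram_law:
  "x \<in> ell2 \<Longrightarrow> y \<in> ell2 \<Longrightarrow> l2normsq (vadd x y) + l2normsq (vsub x y) = 2 * l2normsq x + 2 * l2normsq y"
  by (simp add: l2normsq_add l2normsq_diff)

lemma l2norm_diff_commute: "x \<in> ell2 \<Longrightarrow> y \<in> ell2 \<Longrightarrow> l2norm (vsub x y) = l2norm (vsub y x)"
  using l2norm_scale[OF ell2_sub[of y x], of "-1"] by (simp add: vscale_def vsub_def)

lemma l2norm_diff_triangle:
  assumes "x \<in> ell2" "y \<in> ell2" "z \<in> ell2"
  shows "l2norm (vsub x z) \<le> l2norm (vsub x y) + l2norm (vsub y z)"
proof -
  have "vsub x z = vadd (vsub x y) (vsub y z)"
    by (simp add: vsub_def vadd_def)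
  then show ?thesis
    using l2norm_triangle[OF ell2_sub ell2_sub] assms by metis
qed

lemma l2norm_diff_le: "x \<in> ell2 \<Longrightarrow> y \<in> ell2 \<Longrightarrow> l2norm (vsub x y) \<le> l2norm x + l2norm y"
  using l2norm_diff_triangle[of x "\<lambda>n. 0" y] l2norm_diff_commute[of "\<lambda>n. 0" y]
  by (simp add: vsub_def)

definition l2_Cauchy :: "(nat \<Rightarrow> vec) \<Rightarrow> bool" where
  "l2_Cauchy f \<longleftrightarrow> (\<forall>k. f k \<in> ell2) \<and>
     ((\<lambda>(m, n). l2norm (vsub (f m) (f n))) \<longlongrightarrow> 0) (sequentially \<times>\<^sub>F sequentially)"

lemma l2_Cauchy_iff:
  "l2_Cauchy f \<longleftrightarrow> (\<forall>k. f k \<in> ell2) \<and> (\<forall>e>0. \<exists>N. \<forall>m\<ge>N. \<forall>n\<ge>N. l2norm (vsub (f m) (f n)) < e)"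
proof -
  have "((\<lambda>(m, n). l2norm (vsub (f m) (f n))) \<longlongrightarrow> 0) (sequentially \<times>\<^sub>F sequentially) \<longleftrightarrow>
        (\<forall>e>0. \<exists>N. \<forall>m\<ge>N. \<forall>n\<ge>N. l2norm (vsub (f m) (f n)) < e)" if "\<forall>k. f k \<in> ell2"
    using that by (auto simp: tendsto_iff eventually_prod_sequentially dist_real_def
        l2norm_nonneg ell2_sub l2norm_diff_commute)
  then show ?thesis
    unfolding l2_Cauchy_def by blast
qed

lemma l2_Cauchy_imp_ell2: "l2_Cauchy f \<Longrightarrow> f k \<in> ell2"
  by (simp add: l2_Cauchy_def)

definition l2_eventually_close :: "real \<Rightarrow> (nat \<Rightarrow> vec) \<Rightarrow> bool" where
  "l2_eventually_close e f \<longleftrightarrow> (\<exists>N. \<forall>i\<ge>N. \<forall>j\<ge>N. l2norm (vsub (f i) (f j)) \<le> e)"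

lemma l2_Cauchy_iff_eventually_close:
  "l2_Cauchy f \<longleftrightarrow> (\<forall>k. f k \<in> ell2) \<and> (\<forall>e>0. l2_eventually_close e f)"
proof -
  have "(\<forall>e>0. \<exists>N. \<forall>m\<ge>N. \<forall>n\<ge>N. l2norm (vsub (f m) (f n)) < e) \<longleftrightarrow> (\<forall>e>0. l2_eventually_close e f)"
  proof (intro iffI allI impI)
    fix e :: real
    assume "\<forall>e>0. l2_eventually_close e f" "0 < e"
    then obtain N where "\<forall>i\<ge>N. \<forall>j\<ge>N. l2norm (vsub (f i) (f j)) \<le> e / 2"
      unfolding l2_eventually_close_def by (meson half_gt_zero)
    moreover have "e / 2 < e"
      using \<open>0 < e\<close> by simp
    ultimately show "\<exists>N. \<forall>m\<ge>N. \<forall>n\<ge>N. l2norm (vsub (f m) (f n)) < e"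
      by (meson le_less_trans)
  qed (meson l2_eventually_close_def less_imp_le)
  then show ?thesis
    unfolding l2_Cauchy_iff by blast
qed

lemma l2_eventually_close_subseq:
  assumes "l2_eventually_close e f" "strict_mono r"
  shows "l2_eventually_close e (\<lambda>k. f (r k))"
proof -
  have "N \<le> r m" if "N \<le> m" for N m
    using seq_suble[OF assms(2), of m] that by simp
  then show ?thesis
    using assms(1) unfolding l2_eventually_close_def by (meson order_trans)
qed

lemma l2_eventually_close_shift:
  assumes "l2_eventually_close e (\<lambda>k. f (m + k))"
  shows "l2_eventually_close e f"
proof -
  obtain N where N: "\<forall>i\<ge>N. \<forall>j\<ge>N. l2norm (vsub (f (m + i)) (f (m + j))) \<le> e"
    using assms unfolding l2_eventually_close_def by blast
  have "l2norm (vsub (f i) (f j)) \<le> e" if "m + N \<le> i" "m + N \<le> j" for i j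
    using N[rule_format, of "i - m" "j - m"] that by simp
  then show ?thesis
    unfolding l2_eventually_close_def by blast
qed

abbreviation l2_Cauchy_dist :: "(nat \<Rightarrow> vec) \<Rightarrow> nat \<times> nat \<Rightarrow> real" where
  "l2_Cauchy_dist f \<equiv> \<lambda>(m, n). l2norm (vsub (f m) (f n))"

lemma l2_Cauchy_comparison:
  assumes "\<And>k. f k \<in> ell2" "\<And>m n. l2norm (vsub (f m) (f n)) \<le> h (m, n)"
    and "(h \<longlongrightarrow> 0) (sequentially \<times>\<^sub>F sequentially)"
  shows "l2_Cauchy f"
proof -
  have "\<forall>p. norm (l2_Cauchy_dist f p) \<le> h p"
    using assms(1,2) by (auto simp: l2norm_nonneg ell2_sub)
  then show ?thesis
    unfolding l2_Cauchy_def using assms(1) Lim_null_comparison[OF always_eventually assms(3)] by blast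
qed

lemma l2_Cauchy_add:
  assumes f: "l2_Cauchy f" and g: "l2_Cauchy g"
  shows "l2_Cauchy (\<lambda>k. vadd (f k) (g k))"
proof (rule l2_Cauchy_comparison)
  show "vadd (f k) (g k) \<in> ell2" for k
    using f g by (simp add: l2_Cauchy_imp_ell2 ell2_add)
  show "l2norm (vsub (vadd (f m) (g m)) (vadd (f n) (g n))) \<le> (\<lambda>p. l2_Cauchy_dist f p + l2_Cauchy_dist g p) (m, n)" for m n
  proof -
    have "vsub (vadd (f m) (g m)) (vadd (f n) (g n)) = vadd (vsub (f m) (f n)) (vsub (g m) (g n))"
      by (simp add: vsub_def vadd_def algebra_simps)
    then show ?thesis
      using f g by (simp add: l2norm_triangle ell2_sub l2_Cauchy_imp_ell2)
  qed
  show "((\<lambda>p. l2_Cauchy_dist f p + l2_Cauchy_dist g p) \<longlongrightarrow> 0) (sequentially \<times>\<^sub>F sequentially)"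
    using f g unfolding l2_Cauchy_def by (intro tendsto_add_zero) auto
qed

lemma l2_Cauchy_scale:
  assumes f: "l2_Cauchy f"
  shows "l2_Cauchy (\<lambda>k. vscale c (f k))"
proof (rule l2_Cauchy_comparison)
  show "vscale c (f k) \<in> ell2" for k
    using f by (simp add: l2_Cauchy_imp_ell2 ell2_scale)
  show "l2norm (vsub (vscale c (f m)) (vscale c (f n))) \<le> (\<lambda>p. cmod c * l2_Cauchy_dist f p) (m, n)" for m n
  proof -
    have "vsub (vscale c (f m)) (vscale c (f n)) = vscale c (vsub (f m) (f n))"
      by (simp add: vsub_def vscale_def algebra_simps)
    then show ?thesis
      using f by (simp add: l2norm_scale ell2_sub l2_Cauchy_imp_ell2)
  qed
  show "((\<lambda>p. cmod c * l2_Cauchy_dist f p) \<longlongrightarrow> 0) (sequentially \<times>\<^sub>F sequentially)"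
    using f unfolding l2_Cauchy_def by (intro tendsto_mult_right_zero) auto
qed

lemma l2_Cauchy_diff:
  assumes "l2_Cauchy f" "l2_Cauchy g"
  shows "l2_Cauchy (\<lambda>k. vsub (f k) (g k))"
proof -
  have "vsub (f k) (g k) = vadd (f k) (vscale (-1) (g k))" for k
    by (simp add: vsub_def vadd_def vscale_def)
  then show ?thesis
    using l2_Cauchy_add[OF assms(1) l2_Cauchy_scale[OF assms(2)]] by simp
qed

lemma l2_Cauchy_const: "x \<in> ell2 \<Longrightarrow> l2_Cauchy (\<lambda>k. x)"
  by (rule l2_Cauchy_comparison[where h="\<lambda>p. 0"]) (simp_all add: vsub_def)

lemma l2_Cauchy_subseq:
  assumes "l2_Cauchy f" "strict_mono r"
  shows "l2_Cauchy (\<lambda>k. f (r k))"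
  using assms by (simp add: l2_Cauchy_iff_eventually_close l2_eventually_close_subseq)

lemma l2_Cauchy_diagonal_subseq:
  fixes g :: "nat \<Rightarrow> vec"
  assumes g: "\<And>k. g k \<in> ell2"
    and close: "\<And>e (s :: nat \<Rightarrow> nat). 0 < e \<Longrightarrow> strict_mono s \<Longrightarrow>
      \<exists>r. strict_mono r \<and> l2_eventually_close e (\<lambda>k. g (s (r k)))"
  shows "\<exists>r. strict_mono r \<and> l2_Cauchy (\<lambda>k. g (r k))"
proof -
  define close_n where "close_n n s \<longleftrightarrow> l2_eventually_close (1 / Suc n) (\<lambda>k. g (s k))"
    for n and s :: "nat \<Rightarrow> nat"
  interpret subseqs close_n
  proof
    fix n and s :: "nat \<Rightarrow> nat"
    assume "strict_mono s"
    then show "\<exists>r. strict_mono r \<and> close_n n (s \<circ> r)"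
      using close[of "1 / real (Suc n)" s] by (simp add: close_n_def)
  qed
  have stable: "close_n n (s \<circ> r)" if "strict_mono r" "close_n n s" for n r s
    using l2_eventually_close_subseq[of _ "\<lambda>k. g (s k)" r] that by (simp add: close_n_def)
  have diag: "l2_eventually_close (1 / Suc n) (\<lambda>k. g (diagseq k))" for n
    using diagseq_holds[OF stable, of n] l2_eventually_close_shift[where m="Suc n" and f="\<lambda>k. g (diagseq k)"]
    by (simp add: close_n_def)
  have "l2_eventually_close e (\<lambda>k. g (diagseq k))" if "0 < e" for e
  proof -
    obtain n where "1 / Suc n < e"
      using \<open>0 < e\<close> nat_approx_posE by blast
    then show ?thesis
      using diag[of n] unfolding l2_eventually_close_def by (meson less_imp_le order_trans)
  qed
  then show ?thesis
    using subseq_diagseq g by (auto simp: l2_Cauchy_iff_eventually_close)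
qed

lemma l2_convergent_imp_Cauchy:
  assumes f: "\<And>k. f k \<in> ell2" and y: "y \<in> ell2"
    and lim: "(\<lambda>k. l2norm (vsub (f k) y)) \<longlonglongrightarrow> 0"
  shows "l2_Cauchy f"
proof (rule l2_Cauchy_comparison)
  show "l2norm (vsub (f m) (f n)) \<le> (\<lambda>(m, n). l2norm (vsub (f m) y) + l2norm (vsub (f n) y)) (m, n)" for m n
    using l2norm_diff_triangle[OF f y f, of m n] l2norm_diff_commute[OF y f, of n] by simp
  have "filterlim fst sequentially (sequentially \<times>\<^sub>F sequentially)"
    "filterlim snd sequentially (sequentially \<times>\<^sub>F sequentially)"
    by (simp_all add: filterlim_fst filterlim_snd)
  then show "((\<lambda>(m, n). l2norm (vsub (f m) y) + l2norm (vsub (f n) y)) \<longlongrightarrow> 0) (sequentially \<times>\<^sub>F sequentially)"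
    unfolding case_prod_beta
    by (intro tendsto_add_zero filterlim_compose[OF lim])
qed (use f in auto)

lemma l2_Cauchy_scale_convergent:
  assumes "\<beta> \<longlonglongrightarrow> l" "b \<in> ell2"
  shows "l2_Cauchy (\<lambda>k. vscale (\<beta> k) b)"
proof (rule l2_convergent_imp_Cauchy)
  have "vsub (vscale (\<beta> k) b) (vscale l b) = vscale (\<beta> k - l) b" for k
    by (simp add: vsub_def vscale_def algebra_simps)
  moreover have "(\<lambda>k. cmod (\<beta> k - l) * l2norm b) \<longlonglongrightarrow> 0"
    using assms(1) by (intro tendsto_mult_left_zero) (simp add: LIM_zero tendsto_norm_zero)
  ultimately show "(\<lambda>k. l2norm (vsub (vscale (\<beta> k) b) (vscale l b))) \<longlonglongrightarrow> 0"
    using assms(2) by (simp add: l2norm_scale)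
qed (use assms in \<open>simp_all add: ell2_scale\<close>)

lemma l2_Cauchy_coordinate:
  assumes "l2_Cauchy f"
  shows "Cauchy (\<lambda>k. f k i)"
proof (rule CauchyI)
  fix e :: real
  assume "0 < e"
  then obtain N where N: "\<forall>m\<ge>N. \<forall>n\<ge>N. l2norm (vsub (f m) (f n)) < e"
    using assms unfolding l2_Cauchy_iff by blast
  have "cmod (f m i - f n i) \<le> l2norm (vsub (f m) (f n))" for m n
    using norm_le_l2norm[OF ell2_sub[OF l2_Cauchy_imp_ell2 l2_Cauchy_imp_ell2]] assms
    by (simp add: vsub_def)
  then show "\<exists>M. \<forall>m\<ge>M. \<forall>n\<ge>M. norm (f m i - f n i) < e"
    using N by (meson le_less_trans)
qed

lemma l2_tail_bound:
  assumes f: "\<And>k. f k \<in> ell2" and y: "\<And>i. (\<lambda>k. f k i) \<longlonglongrightarrow> y i"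
    and N: "\<forall>m\<ge>N. \<forall>n\<ge>N. l2norm (vsub (f m) (f n)) < e" and m: "N \<le> m"
  shows "vsub (f m) y \<in> ell2" "l2norm (vsub (f m) y) \<le> e"
proof -
  have partial: "(\<Sum>i<M. (cmod (f m i - y i))\<^sup>2) \<le> e\<^sup>2" for M
  proof (rule LIMSEQ_le_const2)
    show "(\<lambda>n. \<Sum>i<M. (cmod (f m i - f n i))\<^sup>2) \<longlonglongrightarrow> (\<Sum>i<M. (cmod (f m i - y i))\<^sup>2)"
      by (intro tendsto_intros y)
    have "(\<Sum>i<M. (cmod (f m i - f n i))\<^sup>2) \<le> e\<^sup>2" if "N \<le> n" for n
    proof -
      have "L2_set (\<lambda>i. cmod (vsub (f m) (f n) i)) {..<M} \<le> l2norm (vsub (f m) (f n))"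
        by (rule L2_set_le_l2norm) (simp add: f ell2_sub)
      also have "\<dots> < e"
        using N m that by blast
      finally show ?thesis
        by (intro sqrt_le_D) (simp add: L2_set_def vsub_def)
    qed
    then show "\<exists>N. \<forall>n\<ge>N. (\<Sum>i<M. (cmod (f m i - f n i))\<^sup>2) \<le> e\<^sup>2"
      by blast
  qed
  then show ell2: "vsub (f m) y \<in> ell2"
    unfolding mem_ell2_iff vsub_def by (intro summableI_nonneg_bounded) auto
  have "l2normsq (vsub (f m) y) \<le> e\<^sup>2"
    unfolding l2normsq_def using ell2 partial
    by (intro suminf_le_const) (simp_all add: mem_ell2_iff vsub_def)
  moreover have "0 \<le> e"
    using N m l2norm_nonneg[OF ell2_sub[OF f f]] by (meson dual_order.refl le_less_trans less_imp_le)
  ultimately show "l2norm (vsub (f m) y) \<le> e"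
    by (metis l2norm_eq_sqrt real_sqrt_le_mono real_sqrt_abs abs_of_nonneg)
qed

lemma ell2_complete:
  assumes f: "l2_Cauchy f"
  shows "\<exists>y\<in>ell2. (\<lambda>k. l2norm (vsub (f k) y)) \<longlonglongrightarrow> 0"
proof -
  have "\<forall>i. \<exists>l. (\<lambda>k. f k i) \<longlonglongrightarrow> l"
    using l2_Cauchy_coordinate[OF f] by (simp add: Cauchy_convergent_iff convergent_def)
  then obtain y where y: "\<And>i. (\<lambda>k. f k i) \<longlonglongrightarrow> y i"
    by metis
  have fk: "\<And>k. f k \<in> ell2"
    using f by (rule l2_Cauchy_imp_ell2)
  have tail: "\<exists>N. \<forall>m\<ge>N. vsub (f m) y \<in> ell2 \<and> l2norm (vsub (f m) y) \<le> e" if e: "0 < e" for e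
  proof -
    obtain N where N: "\<forall>m\<ge>N. \<forall>n\<ge>N. l2norm (vsub (f m) (f n)) < e"
      using f e unfolding l2_Cauchy_iff by blast
    then show ?thesis
      using l2_tail_bound[OF fk y N] by blast
  qed
  then obtain N where "vsub (f N) y \<in> ell2"
    using zero_less_one by blast
  then have "vsub (f N) (vsub (f N) y) \<in> ell2"
    by (simp add: ell2_sub fk)
  then have y_ell2: "y \<in> ell2"
    by (simp add: vsub_def)
  have "\<exists>N. \<forall>m\<ge>N. norm (l2norm (vsub (f m) y)) < e" if e: "0 < e" for e
  proof -
    obtain N where "\<forall>m\<ge>N. vsub (f m) y \<in> ell2 \<and> l2norm (vsub (f m) y) \<le> e / 2"
      using tail[of "e / 2"] e by auto
    then have "\<forall>m\<ge>N. norm (l2norm (vsub (f m) y)) < e"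
      using e l2norm_nonneg by fastforce
    then show ?thesis
      by blast
  qed
  then show ?thesis
    using y_ell2 by (auto simp: LIMSEQ_iff)
qed

definition linear_op :: "(vec \<Rightarrow> vec) \<Rightarrow> bool" where
  "linear_op T \<longleftrightarrow> (\<forall>x\<in>ell2. T x \<in> ell2) \<and>
     (\<forall>x\<in>ell2. \<forall>y\<in>ell2. \<forall>a b. T (vadd (vscale a x) (vscale b y)) = vadd (vscale a (T x)) (vscale b (T y)))"

lemma linear_op_in: "linear_op T \<Longrightarrow> x \<in> ell2 \<Longrightarrow> T x \<in> ell2"
  by (simp add: linear_op_def)

lemma linear_op_comb:
  "linear_op T \<Longrightarrow> x \<in> ell2 \<Longrightarrow> y \<in> ell2 \<Longrightarrow> T (vadd (vscale a x) (vscale b y)) = vadd (vscale a (T x)) (vscale b (T y))"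
  by (simp add: linear_op_def)

lemma linear_op_add: "linear_op T \<Longrightarrow> x \<in> ell2 \<Longrightarrow> y \<in> ell2 \<Longrightarrow> T (vadd x y) = vadd (T x) (T y)"
  using linear_op_comb[of T x y 1 1] by (simp add: vscale_def)

lemma linear_op_scale: "linear_op T \<Longrightarrow> x \<in> ell2 \<Longrightarrow> T (vscale a x) = vscale a (T x)"
  using linear_op_comb[of T x x a 0] by (simp add: vscale_def vadd_def)

lemma linear_op_diff: "linear_op T \<Longrightarrow> x \<in> ell2 \<Longrightarrow> y \<in> ell2 \<Longrightarrow> T (vsub x y) = vsub (T x) (T y)"
  using linear_op_comb[of T x y 1 "-1"] by (simp add: vscale_def vadd_def vsub_def)

lemma linear_op_zero: "linear_op T \<Longrightarrow> T (\<lambda>n. 0) = (\<lambda>n. 0)"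
  using linear_op_diff[of T "\<lambda>n. 0" "\<lambda>n. 0"] by (simp add: vsub_def)

lemma linear_op_id: "linear_op (\<lambda>x. x)"
  by (simp add: linear_op_def)

lemma linear_op_compose: "linear_op A \<Longrightarrow> linear_op B \<Longrightarrow> linear_op (\<lambda>x. A (B x))"
  unfolding linear_op_def by (simp add: ell2_scale)

lemma linear_op_sub:
  assumes "linear_op A" "linear_op B"
  shows "linear_op (\<lambda>x. vsub (A x) (B x))"
  unfolding linear_op_def
proof (intro conjI ballI allI)
  show "vsub (A x) (B x) \<in> ell2" if "x \<in> ell2" for x
    using that assms by (simp add: linear_op_in ell2_sub)
  show "vsub (A (vadd (vscale a x) (vscale b y))) (B (vadd (vscale a x) (vscale b y))) =
        vadd (vscale a (vsub (A x) (B x))) (vscale b (vsub (A y) (B y)))"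
    if "x \<in> ell2" "y \<in> ell2" for x y a b
    using linear_op_comb[OF assms(1) that] linear_op_comb[OF assms(2) that]
    by (simp add: vsub_def vadd_def vscale_def fun_eq_iff algebra_simps)
qed

lemma bounded_op_imp_linear_op: "bounded_op T \<Longrightarrow> linear_op T"
  unfolding bounded_op_def linear_op_def by blast

lemma bounded_op_in: "bounded_op T \<Longrightarrow> x \<in> ell2 \<Longrightarrow> T x \<in> ell2"
  unfolding bounded_op_def by blast

lemma bounded_opI: "linear_op T \<Longrightarrow> (\<And>x. x \<in> ell2 \<Longrightarrow> l2norm (T x) \<le> K * l2norm x) \<Longrightarrow> bounded_op T"
  unfolding bounded_op_def linear_op_def by blast

lemma bounded_op_bound:
  assumes "bounded_op T"
  obtains K where "0 < K" "\<And>x. x \<in> ell2 \<Longrightarrow> l2norm (T x) \<le> K * l2norm x"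
proof -
  obtain K where K: "\<forall>x\<in>ell2. l2norm (T x) \<le> K * l2norm x"
    using assms unfolding bounded_op_def by blast
  have "l2norm (T x) \<le> max K 1 * l2norm x" if "x \<in> ell2" for x
    using K that mult_right_mono[OF max.cobounded1 l2norm_nonneg[OF that]] by (meson order_trans)
  then show ?thesis
    using that[of "max K 1"] by simp
qed

lemma bounded_op_compose:
  assumes "bounded_op A" "bounded_op B"
  shows "bounded_op (\<lambda>x. A (B x))"
proof -
  obtain KA where KA: "0 < KA" "\<And>x. x \<in> ell2 \<Longrightarrow> l2norm (A x) \<le> KA * l2norm x"
    using bounded_op_bound[OF assms(1)] by blast
  obtain KB where KB: "\<And>x. x \<in> ell2 \<Longrightarrow> l2norm (B x) \<le> KB * l2norm x"
    using bounded_op_bound[OF assms(2)] by blast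
  have "l2norm (A (B x)) \<le> (KA * KB) * l2norm x" if "x \<in> ell2" for x
    using KA(2)[OF bounded_op_in[OF assms(2) that]] mult_left_mono[OF KB[OF that] less_imp_le[OF KA(1)]]
    by (simp add: mult.assoc)
  then show ?thesis
    using assms by (blast intro: bounded_opI linear_op_compose bounded_op_imp_linear_op)
qed

lemma bounded_op_sub:
  assumes "bounded_op A" "bounded_op B"
  shows "bounded_op (\<lambda>x. vsub (A x) (B x))"
proof -
  obtain KA where KA: "\<And>x. x \<in> ell2 \<Longrightarrow> l2norm (A x) \<le> KA * l2norm x"
    using bounded_op_bound[OF assms(1)] by blast
  obtain KB where KB: "\<And>x. x \<in> ell2 \<Longrightarrow> l2norm (B x) \<le> KB * l2norm x"
    using bounded_op_bound[OF assms(2)] by blast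
  have "l2norm (vsub (A x) (B x)) \<le> (KA + KB) * l2norm x" if "x \<in> ell2" for x
    using l2norm_diff_le[OF bounded_op_in[OF assms(1) that] bounded_op_in[OF assms(2) that]] KA[OF that] KB[OF that]
    by (simp add: distrib_right)
  then show ?thesis
    using assms by (blast intro: bounded_opI linear_op_sub bounded_op_imp_linear_op)
qed

lemma l2_Cauchy_dominated:
  assumes f: "\<And>k. f k \<in> ell2" and g: "l2_Cauchy g" and B: "0 \<le> B"
    and dom: "\<And>m n. l2normsq (vsub (f m) (f n)) \<le> B * l2norm (vsub (g m) (g n))"
  shows "l2_Cauchy f"
proof (rule l2_Cauchy_comparison[OF f])
  show "l2norm (vsub (f m) (f n)) \<le> (\<lambda>p. sqrt (B * l2_Cauchy_dist g p)) (m, n)" for m n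
    using dom[of m n] by (simp add: l2norm_eq_sqrt)
  have "((\<lambda>p. sqrt (B * l2_Cauchy_dist g p)) \<longlongrightarrow> sqrt (B * 0)) (sequentially \<times>\<^sub>F sequentially)"
    using g unfolding l2_Cauchy_def by (intro tendsto_intros) auto
  then show "((\<lambda>p. sqrt (B * l2_Cauchy_dist g p)) \<longlongrightarrow> 0) (sequentially \<times>\<^sub>F sequentially)"
    by simp
qed

definition precompact_op :: "(vec \<Rightarrow> vec) \<Rightarrow> bool" where
  "precompact_op T \<longleftrightarrow> (\<forall>(xs :: nat \<Rightarrow> vec) M. (\<forall>k. xs k \<in> ell2 \<and> l2norm (xs k) \<le> M) \<longrightarrow>
     (\<exists>r. strict_mono r \<and> l2_Cauchy (\<lambda>k. T (xs (r k)))))"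

lemma precompact_opD:
  fixes xs :: "nat \<Rightarrow> vec"
  assumes "precompact_op T" "\<forall>k. xs k \<in> ell2 \<and> l2norm (xs k) \<le> M"
  obtains r where "strict_mono r" "l2_Cauchy (\<lambda>k. T (xs (r k)))"
  using assms(1)[unfolded precompact_op_def, THEN spec, THEN spec, THEN mp, OF assms(2)] by blast

lemma precompact_op_unit_ball:
  assumes T: "linear_op T"
    and unit: "\<And>xs :: nat \<Rightarrow> vec. (\<And>k. xs k \<in> ell2) \<Longrightarrow> (\<And>k. l2norm (xs k) \<le> 1) \<Longrightarrow>
                 \<exists>r. strict_mono r \<and> l2_Cauchy (\<lambda>k. T (xs (r k)))"
  shows "precompact_op T"
  unfolding precompact_op_def
proof (intro allI impI)
  fix xs :: "nat \<Rightarrow> vec" and M :: real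
  assume xs: "\<forall>k. xs k \<in> ell2 \<and> l2norm (xs k) \<le> M"
  define c where "c = max M 1"
  have c: "0 < c" "M \<le> c"
    by (auto simp: c_def)
  define ys where "ys k = vscale (complex_of_real (1 / c)) (xs k)" for k
  have ys: "ys k \<in> ell2" "l2norm (ys k) \<le> 1" for k
  proof -
    show "ys k \<in> ell2"
      using xs by (simp add: ys_def ell2_scale)
    have "l2norm (ys k) = l2norm (xs k) / c"
      using xs c(1) by (simp add: ys_def l2norm_scale norm_divide)
    moreover have "l2norm (xs k) \<le> c"
      using xs c(2) by (meson order_trans)
    ultimately show "l2norm (ys k) \<le> 1"
      using c(1) by simp
  qed
  obtain r where r: "strict_mono r" "l2_Cauchy (\<lambda>k. T (ys (r k)))"
    using unit[of ys] ys by blast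
  have scaled: "T (xs k) = vscale (complex_of_real c) (T (ys k))" for k
  proof -
    have "xs k = vscale (complex_of_real c) (ys k)"
      using c by (simp add: ys_def vscale_def)
    then show ?thesis
      using linear_op_scale[OF T ys(1)] by simp
  qed
  have "l2_Cauchy (\<lambda>k. T (xs (r k)))"
    using l2_Cauchy_scale[OF r(2), of "complex_of_real c"] by (simp add: scaled)
  then show "\<exists>r. strict_mono r \<and> l2_Cauchy (\<lambda>k. T (xs (r k)))"
    using r(1) by blast
qed

lemma compact_op_iff_precompact_op:
  assumes T: "bounded_op T"
  shows "compact_op T \<longleftrightarrow> precompact_op T"
proof
  assume compact: "compact_op T"
  show "precompact_op T"
  proof (rule precompact_op_unit_ball[OF bounded_op_imp_linear_op[OF T]])
    fix xs :: "nat \<Rightarrow> vec"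
    assume xs: "\<And>k. xs k \<in> ell2" "\<And>k. l2norm (xs k) \<le> 1"
    then have "\<forall>k. xs k \<in> ell2 \<and> l2norm (xs k) \<le> 1"
      by simp
    then obtain r y where r: "strict_mono r" "y \<in> ell2"
      "(\<lambda>k. l2norm (vsub (T (xs (r k))) y)) \<longlonglongrightarrow> 0"
      using compact[unfolded compact_op_def, THEN conjunct2, rule_format] by blast
    have "l2_Cauchy (\<lambda>k. T (xs (r k)))"
      using bounded_op_in[OF T xs(1)] r(2,3) by (rule l2_convergent_imp_Cauchy)
    then show "\<exists>r. strict_mono r \<and> l2_Cauchy (\<lambda>k. T (xs (r k)))"
      using r(1) by blast
  qed
next
  assume precompact: "precompact_op T"
  have convergent: "\<exists>r y. strict_mono r \<and> y \<in> ell2 \<and> (\<lambda>k. l2norm (vsub (T (xs (r k))) y)) \<longlonglongrightarrow> 0"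
    if xs: "\<forall>k. xs k \<in> ell2 \<and> l2norm (xs k) \<le> 1" for xs :: "nat \<Rightarrow> vec"
  proof -
    obtain r where "strict_mono r" "l2_Cauchy (\<lambda>k. T (xs (r k)))"
      using precompact_opD[OF precompact xs] by blast
    then show ?thesis
      using ell2_complete by blast
  qed
  show "compact_op T"
    unfolding compact_op_def by (intro conjI T allI impI convergent) simp_all
qed

lemma precompact_op_compose_bounded:
  assumes A: "precompact_op A" and B: "bounded_op B"
  shows "precompact_op (\<lambda>x. A (B x))"
  unfolding precompact_op_def
proof (intro allI impI)
  fix xs :: "nat \<Rightarrow> vec" and M :: real
  assume xs: "\<forall>k. xs k \<in> ell2 \<and> l2norm (xs k) \<le> M"
  obtain K where K: "0 < K" "\<And>x. x \<in> ell2 \<Longrightarrow> l2norm (B x) \<le> K * l2norm x"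
    using bounded_op_bound[OF B] by blast
  have "l2norm (B (xs k)) \<le> K * M" for k
  proof -
    have "l2norm (B (xs k)) \<le> K * l2norm (xs k)"
      using K(2) xs by blast
    also have "\<dots> \<le> K * M"
      using K(1) xs by (simp add: mult_left_mono)
    finally show ?thesis .
  qed
  moreover have "B (xs k) \<in> ell2" for k
    using bounded_op_in[OF B] xs by simp
  ultimately have "\<forall>k. B (xs k) \<in> ell2 \<and> l2norm (B (xs k)) \<le> K * M"
    by simp
  then obtain r where "strict_mono r" "l2_Cauchy (\<lambda>k. A (B (xs (r k))))"
    by (rule precompact_opD[OF A])
  then show "\<exists>r. strict_mono r \<and> l2_Cauchy (\<lambda>k. A (B (xs (r k))))"
    by blast
qed

lemma precompact_op_sub:
  assumes A: "precompact_op A" and B: "precompact_op B"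
  shows "precompact_op (\<lambda>x. vsub (A x) (B x))"
  unfolding precompact_op_def
proof (intro allI impI)
  fix xs :: "nat \<Rightarrow> vec" and M :: real
  assume xs: "\<forall>k. xs k \<in> ell2 \<and> l2norm (xs k) \<le> M"
  obtain r1 where r1: "strict_mono r1" "l2_Cauchy (\<lambda>k. A (xs (r1 k)))"
    using precompact_opD[OF A xs] .
  have "\<forall>k. xs (r1 k) \<in> ell2 \<and> l2norm (xs (r1 k)) \<le> M"
    using xs by simp
  then obtain r2 where r2: "strict_mono r2" "l2_Cauchy (\<lambda>k. B (xs (r1 (r2 k))))"
    by (rule precompact_opD[OF B])
  have "l2_Cauchy (\<lambda>k. vsub (A (xs (r1 (r2 k)))) (B (xs (r1 (r2 k)))))"
    by (rule l2_Cauchy_diff[OF l2_Cauchy_subseq[OF r1(2) r2(1)] r2(2)])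
  moreover have "strict_mono (\<lambda>k. r1 (r2 k))"
    using strict_mono_o[OF r1(1) r2(1)] by (simp add: o_def)
  ultimately show "\<exists>r. strict_mono r \<and> l2_Cauchy (\<lambda>k. vsub (A (xs (r k))) (B (xs (r k))))"
    by blast
qed

lemma precompact_op_scale:
  assumes "precompact_op A"
  shows "precompact_op (\<lambda>x. vscale c (A x))"
  unfolding precompact_op_def
proof (intro allI impI)
  fix xs :: "nat \<Rightarrow> vec" and M :: real
  assume "\<forall>k. xs k \<in> ell2 \<and> l2norm (xs k) \<le> M"
  then obtain r where "strict_mono r" "l2_Cauchy (\<lambda>k. A (xs (r k)))"
    by (rule precompact_opD[OF assms])
  then show "\<exists>r. strict_mono r \<and> l2_Cauchy (\<lambda>k. vscale c (A (xs (r k))))"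
    using l2_Cauchy_scale by blast
qed

lemma precompact_op_cong:
  assumes "precompact_op A" "\<And>x. x \<in> ell2 \<Longrightarrow> B x = A x"
  shows "precompact_op B"
  unfolding precompact_op_def
proof (intro allI impI)
  fix xs :: "nat \<Rightarrow> vec" and M :: real
  assume xs: "\<forall>k. xs k \<in> ell2 \<and> l2norm (xs k) \<le> M"
  then obtain r where "strict_mono r" "l2_Cauchy (\<lambda>k. A (xs (r k)))"
    using precompact_opD[OF assms(1)] by blast
  moreover have "(\<lambda>k. B (xs (r k))) = (\<lambda>k. A (xs (r k)))"
    using assms(2) xs by simp
  ultimately show "\<exists>r. strict_mono r \<and> l2_Cauchy (\<lambda>k. B (xs (r k)))"
    by auto
qed

lemma precompact_op_dominated:
  assumes A: "linear_op A" and C: "precompact_op C" "linear_op C"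
    and dom: "\<And>z. z \<in> ell2 \<Longrightarrow> l2normsq (A z) \<le> l2norm z * l2norm (C z)"
  shows "precompact_op A"
  unfolding precompact_op_def
proof (intro allI impI)
  fix xs :: "nat \<Rightarrow> vec" and M :: real
  assume xs: "\<forall>k. xs k \<in> ell2 \<and> l2norm (xs k) \<le> M"
  then obtain r where r: "strict_mono r" "l2_Cauchy (\<lambda>k. C (xs (r k)))"
    by (rule precompact_opD[OF C(1)])
  have "l2_Cauchy (\<lambda>k. A (xs (r k)))"
  proof (rule l2_Cauchy_dominated[OF _ r(2)])
    show "A (xs (r k)) \<in> ell2" for k
      using xs A by (simp add: linear_op_in)
    show "0 \<le> 2 * M"
      using xs l2norm_nonneg by (meson mult_nonneg_nonneg order_trans zero_le_numeral)
    fix m n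
    define z where "z = vsub (xs (r m)) (xs (r n))"
    have z: "z \<in> ell2"
      using xs by (simp add: z_def ell2_sub)
    have "l2norm z \<le> 2 * M"
      using l2norm_diff_le[of "xs (r m)" "xs (r n)"] xs[rule_format, of "r m"] xs[rule_format, of "r n"]
      unfolding z_def by linarith
    then have "l2normsq (A z) \<le> 2 * M * l2norm (C z)"
      using dom[OF z] l2norm_nonneg[of "C z"] linear_op_in[OF C(2) z]
      by (meson mult_right_mono order_trans)
    moreover have "A z = vsub (A (xs (r m))) (A (xs (r n)))" "C z = vsub (C (xs (r m))) (C (xs (r n)))"
      using xs by (simp_all add: z_def linear_op_diff A C(2))
    ultimately show "l2normsq (vsub (A (xs (r m))) (A (xs (r n)))) \<le> 2 * M * l2norm (vsub (C (xs (r m))) (C (xs (r n))))"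
      by simp
  qed
  then show "\<exists>r. strict_mono r \<and> l2_Cauchy (\<lambda>k. A (xs (r k)))"
    using r(1) by blast
qed

lemma precompact_op_adjoint:
  assumes T: "precompact_op T" "linear_op T" and S: "bounded_op S" and adj: "adjoint_of S T"
  shows "precompact_op S"
proof (rule precompact_op_dominated[OF bounded_op_imp_linear_op[OF S]])
  show "precompact_op (\<lambda>x. T (S x))"
    using T(1) S by (rule precompact_op_compose_bounded)
  show "linear_op (\<lambda>x. T (S x))"
    using T(2) bounded_op_imp_linear_op[OF S] by (rule linear_op_compose)
  fix z
  assume z: "z \<in> ell2"
  have Sz: "S z \<in> ell2"
    using S z by (rule bounded_op_in)
  have "complex_of_real (l2normsq (S z)) = l2inner (T (S z)) z"
    using adj Sz z by (simp add: adjoint_of_def l2inner_self)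
  then have "l2normsq (S z) = cmod (l2inner (T (S z)) z)"
    using l2normsq_nonneg[OF Sz] by (metis norm_of_real abs_of_nonneg)
  also have "\<dots> \<le> l2norm (T (S z)) * l2norm z"
    using linear_op_in[OF T(2) Sz] z by (rule l2inner_cauchy_schwarz)
  finally show "l2normsq (S z) \<le> l2norm z * l2norm (T (S z))"
    by (simp add: mult.commute)
qed

lemma precompact_op_approx:
  assumes T: "linear_op T"
    and approx: "\<And>e (xs :: nat \<Rightarrow> vec). 0 < e \<Longrightarrow> \<forall>k. xs k \<in> ell2 \<and> l2norm (xs k) \<le> 1 \<Longrightarrow>
       \<exists>r. strict_mono r \<and> l2_eventually_close e (\<lambda>k. T (xs (r k)))"
  shows "precompact_op T"
proof (rule precompact_op_unit_ball[OF T])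
  fix xs :: "nat \<Rightarrow> vec"
  assume xs: "\<And>k. xs k \<in> ell2" "\<And>k. l2norm (xs k) \<le> 1"
  show "\<exists>r. strict_mono r \<and> l2_Cauchy (\<lambda>k. T (xs (r k)))"
  proof (rule l2_Cauchy_diagonal_subseq)
    show "T (xs k) \<in> ell2" for k
      using T xs by (simp add: linear_op_in)
    show "\<exists>r. strict_mono r \<and> l2_eventually_close e (\<lambda>k. T (xs (s (r k))))"
      if "0 < e" for e and s :: "nat \<Rightarrow> nat"
      using approx[of e "\<lambda>k. xs (s k)"] that xs by simp
  qed
qed

lemma orth_proj_bounded: "orth_proj P \<Longrightarrow> bounded_op P"
  by (simp add: orth_proj_def)

lemma orth_proj_linear: "orth_proj P \<Longrightarrow> linear_op P"
  by (simp add: orth_proj_def bounded_op_imp_linear_op)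

lemma orth_proj_in: "orth_proj P \<Longrightarrow> x \<in> ell2 \<Longrightarrow> P x \<in> ell2"
  by (simp add: orth_proj_linear linear_op_in)

lemma orth_proj_idem: "orth_proj P \<Longrightarrow> x \<in> ell2 \<Longrightarrow> P (P x) = P x"
  by (simp add: orth_proj_def)

lemma orth_proj_self_adjoint: "orth_proj P \<Longrightarrow> x \<in> ell2 \<Longrightarrow> y \<in> ell2 \<Longrightarrow> l2inner (P x) y = l2inner x (P y)"
  by (simp add: orth_proj_def adjoint_of_def)

lemma orth_proj_range_iff: "orth_proj P \<Longrightarrow> y \<in> P ` ell2 \<longleftrightarrow> y \<in> ell2 \<and> P y = y"
  by (auto simp: orth_proj_in orth_proj_idem intro: image_eqI[of y P y, OF sym])

lemma orth_proj_orthogonal: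
  assumes P: "orth_proj P" and x: "x \<in> ell2" and y: "y \<in> ell2"
  shows "l2inner (P y) (vsub x (P x)) = 0"
proof -
  have "l2inner (P y) (vsub x (P x)) = l2inner y (vsub (P x) (P (P x)))"
    using P x y by (simp add: orth_proj_self_adjoint orth_proj_in orth_proj_linear ell2_sub linear_op_diff)
  then show ?thesis
    using P x by (simp add: orth_proj_idem vsub_def)
qed

lemma orth_proj_pythagoras:
  assumes P: "orth_proj P" and x: "x \<in> ell2"
  shows "l2normsq x = l2normsq (P x) + l2normsq (vsub x (P x))"
proof -
  have "l2normsq (vadd (P x) (vsub x (P x))) = l2normsq (P x) + l2normsq (vsub x (P x))"
    using P x by (simp add: pythagoras orth_proj_in ell2_sub orth_proj_orthogonal)
  then show ?thesis
    by (simp add: vadd_def vsub_def)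
qed

lemma orth_proj_norm_le:
  assumes P: "orth_proj P" and x: "x \<in> ell2"
  shows "l2norm (P x) \<le> l2norm x" "l2norm (vsub x (P x)) \<le> l2norm x"
  using orth_proj_pythagoras[OF P x] l2normsq_nonneg[OF orth_proj_in[OF P x]]
    l2normsq_nonneg[OF ell2_sub[OF x orth_proj_in[OF P x]]]
  by (simp_all add: l2norm_eq_sqrt)

definition compl_proj :: "(vec \<Rightarrow> vec) \<Rightarrow> vec \<Rightarrow> vec" where
  "compl_proj Q x = vsub x (Q x)"

lemma orth_proj_compl_proj_zero:
  assumes "orth_proj Q" "x \<in> ell2"
  shows "Q (compl_proj Q x) = (\<lambda>n. 0)"
proof -
  have "Q (compl_proj Q x) = vsub (Q x) (Q (Q x))"
    using assms by (simp add: compl_proj_def linear_op_diff orth_proj_linear orth_proj_in)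
  then show ?thesis
    using assms by (simp add: orth_proj_idem vsub_def)
qed

lemma orth_proj_compl_proj:
  assumes Q: "orth_proj Q"
  shows "orth_proj (compl_proj Q)"
  unfolding orth_proj_def
proof (intro conjI ballI)
  have "linear_op (compl_proj Q)"
    using linear_op_sub[OF linear_op_id orth_proj_linear[OF Q]] by (simp add: compl_proj_def[abs_def])
  then show "bounded_op (compl_proj Q)"
    by (rule bounded_opI[where K=1]) (simp add: compl_proj_def orth_proj_norm_le Q)
  show "compl_proj Q (compl_proj Q x) = compl_proj Q x" if "x \<in> ell2" for x
    using orth_proj_compl_proj_zero[OF Q that] by (simp add: compl_proj_def[of Q "compl_proj Q x"] vsub_def)
  show "adjoint_of (compl_proj Q) (compl_proj Q)"
    using Q by (simp add: adjoint_of_def compl_proj_def l2inner_diff_left l2inner_diff_right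
        orth_proj_in orth_proj_self_adjoint)
qed

lemma l2dist_orth_proj_range:
  assumes Q: "orth_proj Q" and v: "v \<in> ell2"
  shows "l2dist v (Q ` ell2) = l2norm (compl_proj Q v)"
  unfolding l2dist_def
proof (rule cInf_eq_minimum)
  show "l2norm (compl_proj Q v) \<in> {l2norm (vsub v w) |w. w \<in> Q ` ell2}"
    using v by (auto simp: compl_proj_def)
  fix d
  assume "d \<in> {l2norm (vsub v w) |w. w \<in> Q ` ell2}"
  then obtain u where u: "u \<in> ell2" "d = l2norm (vsub v (Q u))"
    by blast
  have "Q (vsub v u) = vsub (Q v) (Q u)"
    using Q v u by (simp add: linear_op_diff orth_proj_linear)
  then have "vsub v (Q u) = vadd (compl_proj Q v) (Q (vsub v u))"
    by (simp add: compl_proj_def vsub_def vadd_def)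
  moreover have "l2inner (compl_proj Q v) (Q (vsub v u)) = 0"
    using l2inner_commute[OF orth_proj_in[OF Q ell2_sub] ell2_sub] orth_proj_orthogonal[OF Q v ell2_sub]
      Q v u orth_proj_in by (simp add: compl_proj_def)
  ultimately have "l2normsq (vsub v (Q u)) = l2normsq (compl_proj Q v) + l2normsq (Q (vsub v u))"
    using Q v u by (simp add: pythagoras compl_proj_def ell2_sub orth_proj_in)
  then show "l2norm (compl_proj Q v) \<le> d"
    using u l2normsq_nonneg[OF orth_proj_in[OF Q ell2_sub[OF v u(1)]]] by (simp add: l2norm_eq_sqrt)
qed

lemma closed_subspace_subset: "closed_subspace E \<Longrightarrow> E \<subseteq> ell2"
  by (simp add: closed_subspace_def)

lemma closed_subspace_zero: "closed_subspace E \<Longrightarrow> (\<lambda>n. 0) \<in> E"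
  by (simp add: closed_subspace_def)

lemma closed_subspace_comb:
  "closed_subspace E \<Longrightarrow> x \<in> E \<Longrightarrow> y \<in> E \<Longrightarrow> vadd (vscale a x) (vscale b y) \<in> E"
  by (simp add: closed_subspace_def)

lemma closed_subspace_add: "closed_subspace E \<Longrightarrow> x \<in> E \<Longrightarrow> y \<in> E \<Longrightarrow> vadd x y \<in> E"
  using closed_subspace_comb[of E x y 1 1] by (simp add: vscale_def)

lemma closed_subspace_scale: "closed_subspace E \<Longrightarrow> x \<in> E \<Longrightarrow> vscale a x \<in> E"
  using closed_subspace_comb[of E x x a 0] by (simp add: vscale_def vadd_def)

lemma closed_subspace_diff: "closed_subspace E \<Longrightarrow> x \<in> E \<Longrightarrow> y \<in> E \<Longrightarrow> vsub x y \<in> E"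
  using closed_subspace_comb[of E x y 1 "-1"] by (simp add: vscale_def vadd_def vsub_def)

lemma closed_subspace_limit:
  "closed_subspace E \<Longrightarrow> (\<And>k. xs k \<in> E) \<Longrightarrow> x \<in> ell2 \<Longrightarrow> (\<lambda>k. l2norm (vsub (xs k) x)) \<longlonglongrightarrow> 0 \<Longrightarrow> x \<in> E"
  unfolding closed_subspace_def by blast

definition remove_component :: "vec \<Rightarrow> vec \<Rightarrow> vec" where
  "remove_component b y = vsub y (vscale (l2inner b y / complex_of_real (l2normsq b)) b)"

lemma remove_component_in: "b \<in> ell2 \<Longrightarrow> y \<in> ell2 \<Longrightarrow> remove_component b y \<in> ell2"
  by (simp add: remove_component_def ell2_sub ell2_scale)

lemma remove_component_orthogonal:
  assumes b: "b \<in> ell2" "b \<noteq> (\<lambda>n. 0)" and y: "y \<in> ell2"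
  shows "l2inner b (remove_component b y) = 0"
  using b y l2normsq_eq_0_iff[OF b(1)]
  by (simp add: remove_component_def l2inner_diff_right l2inner_scale_right ell2_scale l2inner_self)

lemma l2normsq_remove_component:
  assumes b: "b \<in> ell2" "b \<noteq> (\<lambda>n. 0)" and y: "y \<in> ell2"
  shows "l2normsq (remove_component b y) = l2normsq y - (cmod (l2inner b y))\<^sup>2 / l2normsq b"
proof -
  define \<beta> where "\<beta> = l2inner b y / complex_of_real (l2normsq b)"
  have nb: "0 < l2normsq b"
    using b l2normsq_nonneg[OF b(1)] l2normsq_eq_0_iff[OF b(1)] by linarith
  have rc: "remove_component b y \<in> ell2"
    using b(1) y by (rule remove_component_in)
  have decomp: "vadd (remove_component b y) (vscale \<beta> b) = y"
    by (simp add: remove_component_def \<beta>_def vadd_def vsub_def vscale_def)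
  have orth: "l2inner (remove_component b y) (vscale \<beta> b) = 0"
    using b y rc remove_component_orthogonal[OF b y] l2inner_commute[OF b(1) rc]
    by (simp add: l2inner_scale_right)
  have "l2normsq y = l2normsq (remove_component b y) + l2normsq (vscale \<beta> b)"
    using pythagoras[OF rc ell2_scale[OF b(1)] orth] decomp by simp
  also have "l2normsq (vscale \<beta> b) = (cmod \<beta>)\<^sup>2 * l2normsq b"
    using b(1) by (rule l2normsq_scale)
  also have "\<dots> = (cmod (l2inner b y))\<^sup>2 / l2normsq b"
    using nb by (simp add: \<beta>_def norm_divide power_divide power2_eq_square)
  finally show ?thesis
    by simp
qed

lemma remove_component_norm_le:
  assumes "b \<in> ell2" "b \<noteq> (\<lambda>n. 0)" "y \<in> ell2"
  shows "l2norm (remove_component b y) \<le> l2norm y"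
  using l2normsq_remove_component[OF assms] l2normsq_nonneg[OF assms(1)]
  by (simp add: l2norm_eq_sqrt)

lemma tendsto_add_prod_sequentially:
  fixes f g :: "nat \<Rightarrow> real"
  assumes "f \<longlonglongrightarrow> 0" "g \<longlonglongrightarrow> 0"
  shows "((\<lambda>(m, n). f m + g n) \<longlongrightarrow> 0) (sequentially \<times>\<^sub>F sequentially)"
  unfolding case_prod_beta
  by (intro tendsto_add_zero filterlim_compose[OF assms(1) filterlim_fst]
      filterlim_compose[OF assms(2) filterlim_snd])

lemma minimizing_sequence_Cauchy:
  assumes E: "closed_subspace E" and x: "x \<in> ell2" and es: "\<And>k. es k \<in> E"
    and d: "\<And>e. e \<in> E \<Longrightarrow> d \<le> l2normsq (vsub x e)"
    and close: "\<And>k. l2normsq (vsub x (es k)) \<le> d + inverse (real (Suc k))"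
  shows "l2_Cauchy es"
proof (rule l2_Cauchy_comparison)
  have es_ell2: "es k \<in> ell2" for k
    using es closed_subspace_subset[OF E] by blast
  then show "es k \<in> ell2" for k .
  define h where "h = (\<lambda>(i, j). 2 * inverse (real (Suc i)) + 2 * inverse (real (Suc j)))"
  show "l2norm (vsub (es i) (es j)) \<le> (\<lambda>p. sqrt (h p)) (i, j)" for i j
  proof -
    define a where "a = vsub x (es j)"
    define b where "b = vsub x (es i)"
    have ab: "a \<in> ell2" "b \<in> ell2"
      using x es_ell2 by (simp_all add: a_def b_def ell2_sub)
    define m where "m = vscale (1 / 2) (vadd (es i) (es j))"
    have "m \<in> E"
      using E es by (simp add: m_def closed_subspace_add closed_subspace_scale)
    moreover have "vadd a b = vscale 2 (vsub x m)"
      by (simp add: a_def b_def m_def vadd_def vsub_def vscale_def algebra_simps)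
    ultimately have "4 * d \<le> l2normsq (vadd a b)"
      using d[of m] x closed_subspace_subset[OF E] by (auto simp: l2normsq_scale ell2_sub)
    moreover have "vsub a b = vsub (es i) (es j)"
      by (simp add: a_def b_def vsub_def)
    ultimately have "l2normsq (vsub (es i) (es j)) \<le> h (i, j)"
      using parallelogram_law[OF ab] close[of i] close[of j] by (simp add: a_def b_def h_def)
    then show ?thesis
      by (simp add: l2norm_eq_sqrt)
  qed
  have "(h \<longlongrightarrow> 0) (sequentially \<times>\<^sub>F sequentially)"
    unfolding h_def
    by (intro tendsto_add_prod_sequentially tendsto_mult_right_zero LIMSEQ_inverse_real_of_nat)
  then show "((\<lambda>p. sqrt (h p)) \<longlongrightarrow> 0) (sequentially \<times>\<^sub>F sequentially)"
    using tendsto_real_sqrt by fastforce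
qed

lemma closed_subspace_nearest_point:
  assumes E: "closed_subspace E" and x: "x \<in> ell2"
  obtains p where "p \<in> E" "\<And>e. e \<in> E \<Longrightarrow> l2normsq (vsub x p) \<le> l2normsq (vsub x e)"
proof -
  have E_ell2: "\<And>e. e \<in> E \<Longrightarrow> e \<in> ell2"
    using closed_subspace_subset[OF E] by blast
  define D where "D = {l2normsq (vsub x e) | e. e \<in> E}"
  have D_ne: "D \<noteq> {}"
    using closed_subspace_zero[OF E] by (auto simp: D_def)
  have "bdd_below D"
    unfolding D_def bdd_below_def using E_ell2 x by (blast intro: l2normsq_nonneg ell2_sub)
  then have d: "Inf D \<le> l2normsq (vsub x e)" if "e \<in> E" for e
    using that by (auto simp: D_def intro: cInf_lower)
  have "\<exists>e\<in>E. l2normsq (vsub x e) < Inf D + inverse (real (Suc k))" for k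
    using cInf_lessD[OF D_ne, of "Inf D + inverse (real (Suc k))"] by (auto simp: D_def)
  then obtain es where es: "\<And>k. es k \<in> E" "\<And>k. l2normsq (vsub x (es k)) < Inf D + inverse (real (Suc k))"
    by metis
  have "l2_Cauchy es"
    by (rule minimizing_sequence_Cauchy[OF E x es(1) d less_imp_le[OF es(2)]])
  then obtain p where p: "p \<in> ell2" "(\<lambda>k. l2norm (vsub (es k) p)) \<longlonglongrightarrow> 0"
    using ell2_complete by blast
  have "p \<in> E"
    using E es(1) p by (rule closed_subspace_limit)
  have "l2norm (vsub x p) \<le> sqrt (Inf D + inverse (real (Suc k))) + l2norm (vsub (es k) p)" for k
  proof -
    have "l2norm (vsub x (es k)) \<le> sqrt (Inf D + inverse (real (Suc k)))"
      using es(2)[of k] by (simp add: l2norm_eq_sqrt)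
    then show ?thesis
      using l2norm_diff_triangle[OF x E_ell2[OF es(1)] p(1), of k] by linarith
  qed
  moreover have "(\<lambda>k. sqrt (Inf D + inverse (real (Suc k))) + l2norm (vsub (es k) p)) \<longlonglongrightarrow> sqrt (Inf D + 0) + 0"
    by (intro tendsto_intros LIMSEQ_inverse_real_of_nat p(2))
  ultimately have "l2norm (vsub x p) \<le> sqrt (Inf D)"
    using LIMSEQ_le_const by fastforce
  then have "l2normsq (vsub x p) \<le> Inf D"
    by (simp add: l2norm_eq_sqrt)
  then show thesis
    using that[OF \<open>p \<in> E\<close>] d by (meson order_trans)
qed

lemma nearest_point_orthogonal:
  assumes E: "closed_subspace E" and x: "x \<in> ell2" and p: "p \<in> E"
    and nearest: "\<And>e. e \<in> E \<Longrightarrow> l2normsq (vsub x p) \<le> l2normsq (vsub x e)"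
    and f: "f \<in> E"
  shows "l2inner f (vsub x p) = 0"
proof (cases "f = (\<lambda>n. 0)")
  case False
  have ell2: "f \<in> ell2" "vsub x p \<in> ell2"
    using E f p x closed_subspace_subset by (auto intro: ell2_sub)
  define \<beta> where "\<beta> = l2inner f (vsub x p) / complex_of_real (l2normsq f)"
  have "vadd p (vscale \<beta> f) \<in> E"
    using E p f by (simp add: closed_subspace_add closed_subspace_scale)
  moreover have "vsub x (vadd p (vscale \<beta> f)) = remove_component f (vsub x p)"
    by (simp add: remove_component_def \<beta>_def vsub_def vadd_def vscale_def algebra_simps)
  ultimately have "l2normsq (vsub x p) \<le> l2normsq (remove_component f (vsub x p))"
    using nearest by metis
  also have "\<dots> = l2normsq (vsub x p) - (cmod (l2inner f (vsub x p)))\<^sup>2 / l2normsq f"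
    by (rule l2normsq_remove_component[OF ell2(1) False ell2(2)])
  finally have "(cmod (l2inner f (vsub x p)))\<^sup>2 / l2normsq f \<le> 0"
    by simp
  moreover have "0 < l2normsq f"
    using ell2 False l2normsq_nonneg l2normsq_eq_0_iff by (metis order_less_le)
  ultimately show ?thesis
    by (simp add: divide_le_0_iff)
qed simp

definition subspace_proj :: "vec set \<Rightarrow> vec \<Rightarrow> vec" where
  "subspace_proj E x = (SOME p. p \<in> E \<and> (\<forall>e\<in>E. l2inner e (vsub x p) = 0))"

lemma subspace_proj:
  assumes E: "closed_subspace E" and x: "x \<in> ell2"
  shows "subspace_proj E x \<in> E" "\<And>e. e \<in> E \<Longrightarrow> l2inner e (vsub x (subspace_proj E x)) = 0"
proof -
  obtain p where "p \<in> E" "\<And>e. e \<in> E \<Longrightarrow> l2normsq (vsub x p) \<le> l2normsq (vsub x e)"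
    using closed_subspace_nearest_point[OF E x] by blast
  then have "\<exists>p. p \<in> E \<and> (\<forall>e\<in>E. l2inner e (vsub x p) = 0)"
    using nearest_point_orthogonal[OF E x] by blast
  then have "subspace_proj E x \<in> E \<and> (\<forall>e\<in>E. l2inner e (vsub x (subspace_proj E x)) = 0)"
    unfolding subspace_proj_def by (rule someI_ex)
  then show "subspace_proj E x \<in> E" "\<And>e. e \<in> E \<Longrightarrow> l2inner e (vsub x (subspace_proj E x)) = 0"
    by blast+
qed

lemma subspace_proj_unique:
  assumes E: "closed_subspace E" and x: "x \<in> ell2"
    and p: "p \<in> E" "\<And>e. e \<in> E \<Longrightarrow> l2inner e (vsub x p) = 0"
  shows "subspace_proj E x = p"
proof -
  define d where "d = vsub (subspace_proj E x) p"
  have d: "d \<in> E"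
    using E p subspace_proj[OF E x] by (simp add: d_def closed_subspace_diff)
  have ell2: "d \<in> ell2" "vsub x p \<in> ell2" "vsub x (subspace_proj E x) \<in> ell2"
    using d p x subspace_proj[OF E x] closed_subspace_subset[OF E] by (auto intro: ell2_sub)
  have "d = vsub (vsub x p) (vsub x (subspace_proj E x))"
    by (simp add: d_def vsub_def)
  then have "l2inner d d = l2inner d (vsub x p) - l2inner d (vsub x (subspace_proj E x))"
    using ell2 by (simp add: l2inner_diff_right)
  then have "l2normsq d = 0"
    using d p subspace_proj[OF E x] l2inner_self[OF ell2(1)] by simp
  then show ?thesis
    using l2normsq_eq_0_iff[OF ell2(1)] by (simp add: d_def vsub_def fun_eq_iff)
qed

lemma subspace_proj_fixed: "closed_subspace E \<Longrightarrow> e \<in> E \<Longrightarrow> subspace_proj E e = e"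
  by (rule subspace_proj_unique) (auto simp: closed_subspace_def vsub_def)

lemma orth_proj_subspace_proj:
  assumes E: "closed_subspace E"
  shows "orth_proj (subspace_proj E)"
proof -
  note proj = subspace_proj[OF E]
  have E_ell2: "\<And>e. e \<in> E \<Longrightarrow> e \<in> ell2"
    using closed_subspace_subset[OF E] by blast
  have in_ell2: "subspace_proj E x \<in> ell2" if "x \<in> ell2" for x
    using E_ell2 proj(1)[OF that] .
  have linear: "linear_op (subspace_proj E)"
    unfolding linear_op_def
  proof (intro conjI ballI allI)
    fix x y a b
    assume x: "x \<in> ell2" and y: "y \<in> ell2"
    have "l2inner e (vsub (vadd (vscale a x) (vscale b y))
            (vadd (vscale a (subspace_proj E x)) (vscale b (subspace_proj E y)))) = 0" if e: "e \<in> E" for e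
    proof -
      have "vsub (vadd (vscale a x) (vscale b y)) (vadd (vscale a (subspace_proj E x)) (vscale b (subspace_proj E y)))
          = vadd (vscale a (vsub x (subspace_proj E x))) (vscale b (vsub y (subspace_proj E y)))"
        by (simp add: vadd_def vsub_def vscale_def algebra_simps)
      then show ?thesis
        using x y e E_ell2 proj[OF x] proj[OF y] in_ell2
        by (simp add: l2inner_add_right l2inner_scale_right ell2_scale ell2_sub)
    qed
    then show "subspace_proj E (vadd (vscale a x) (vscale b y)) =
        vadd (vscale a (subspace_proj E x)) (vscale b (subspace_proj E y))"
      using E x y proj(1)[OF x] proj(1)[OF y]
      by (intro subspace_proj_unique) (simp_all add: ell2_add ell2_scale closed_subspace_comb)
  qed (use in_ell2 in blast)
  have pythagoras: "l2normsq x = l2normsq (subspace_proj E x) + l2normsq (vsub x (subspace_proj E x))"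
    if x: "x \<in> ell2" for x
    using pythagoras[OF in_ell2[OF x] ell2_sub[OF x in_ell2[OF x]] proj(2)[OF x proj(1)[OF x]]]
    by (simp add: vadd_def vsub_def)
  show ?thesis
    unfolding orth_proj_def adjoint_of_def
  proof (intro conjI ballI)
    show "bounded_op (subspace_proj E)"
    proof (rule bounded_opI[OF linear, where K=1])
      fix x
      assume x: "x \<in> ell2"
      show "l2norm (subspace_proj E x) \<le> 1 * l2norm x"
        using pythagoras[OF x] l2normsq_nonneg[OF ell2_sub[OF x in_ell2[OF x]]]
        by (simp add: l2norm_eq_sqrt)
    qed
    show "subspace_proj E (subspace_proj E x) = subspace_proj E x" if "x \<in> ell2" for x
      using E proj(1)[OF that] by (rule subspace_proj_fixed)
  next
    fix x y
    assume x: "x \<in> ell2" and y: "y \<in> ell2"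
    have "l2inner (subspace_proj E x) y = l2inner (subspace_proj E x) (subspace_proj E y)"
      using proj(2)[OF y proj(1)[OF x]] in_ell2 x y by (simp add: l2inner_diff_right)
    also have "\<dots> = l2inner x (subspace_proj E y)"
    proof -
      have "l2inner (subspace_proj E y) x = l2inner (subspace_proj E y) (subspace_proj E x)"
        using proj(2)[OF x proj(1)[OF y]] in_ell2 x y by (simp add: l2inner_diff_right)
      then show ?thesis
        using l2inner_commute[OF x in_ell2[OF y]] l2inner_commute[OF in_ell2[OF x] in_ell2[OF y]]
        by simp
    qed
    finally show "l2inner (subspace_proj E x) y = l2inner x (subspace_proj E y)" .
  qed
qed

lemma lspan_empty: "lspan {} = {(\<lambda>n. 0)}"
  by (simp add: lspan_def)

lemma lspan_insert:
  assumes "finite S" "a \<notin> S"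
  shows "lspan (insert a S) = {vadd (vscale \<alpha> a) z | \<alpha> z. z \<in> lspan S}"
proof (intro equalityI subsetI)
  fix y
  assume "y \<in> lspan (insert a S)"
  then obtain c where "y = (\<lambda>n. \<Sum>s\<in>insert a S. c s * s n)"
    by (auto simp: lspan_def)
  then have "y = vadd (vscale (c a) a) (\<lambda>n. \<Sum>s\<in>S. c s * s n)"
    using assms by (simp add: vadd_def vscale_def)
  then show "y \<in> {vadd (vscale \<alpha> a) z | \<alpha> z. z \<in> lspan S}"
    by (auto simp: lspan_def)
next
  fix y
  assume "y \<in> {vadd (vscale \<alpha> a) z | \<alpha> z. z \<in> lspan S}"
  then obtain \<alpha> c where "y = vadd (vscale \<alpha> a) (\<lambda>n. \<Sum>s\<in>S. c s * s n)"
    by (auto simp: lspan_def)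
  moreover have "(\<Sum>s\<in>S. (c(a := \<alpha>)) s * s n) = (\<Sum>s\<in>S. c s * s n)" for n
    using assms(2) by (intro sum.cong) auto
  ultimately have "y = (\<lambda>n. \<Sum>s\<in>insert a S. (c(a := \<alpha>)) s * s n)"
    using assms by (simp add: vadd_def vscale_def)
  then show "y \<in> lspan (insert a S)"
    by (auto simp: lspan_def)
qed

lemma lspan_subset:
  assumes "finite S" "S \<subseteq> V" "(\<lambda>n. 0) \<in> V"
    and comb: "\<And>x y a b. x \<in> V \<Longrightarrow> y \<in> V \<Longrightarrow> vadd (vscale a x) (vscale b y) \<in> V"
  shows "lspan S \<subseteq> V"
  using assms(1,2)
proof (induction S rule: finite_induct)
  case empty
  then show ?case
    using assms(3) by (simp add: lspan_empty)
next
  case (insert a S)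
  have "vadd (vscale \<alpha> a) z \<in> V" if "z \<in> V" for \<alpha> z
    using comb[of a z \<alpha> 1] insert.prems that by (simp add: vscale_def)
  then show ?case
    using insert by (auto simp: lspan_insert)
qed

lemma lspan_ell2: "finite S \<Longrightarrow> S \<subseteq> ell2 \<Longrightarrow> lspan S \<subseteq> ell2"
  by (rule lspan_subset) (simp_all add: ell2_add ell2_scale)

lemma lspan_closed_subspace: "closed_subspace E \<Longrightarrow> finite S \<Longrightarrow> S \<subseteq> E \<Longrightarrow> lspan S \<subseteq> E"
  by (rule lspan_subset) (simp_all add: closed_subspace_zero closed_subspace_comb)

lemma lspan_orthogonal:
  assumes "finite S" "S \<subseteq> ell2" "z \<in> ell2" "\<And>t. t \<in> S \<Longrightarrow> l2inner t z = 0" "y \<in> lspan S"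
  shows "l2inner y z = 0"
proof -
  have "lspan S \<subseteq> {y \<in> ell2. l2inner y z = 0}"
    using assms(1-4)
    by (intro lspan_subset) (auto simp: ell2_add ell2_scale l2inner_add_left l2inner_scale_left)
  then show ?thesis
    using assms(5) by blast
qed

lemma lspan_comb:
  assumes "x \<in> lspan S" "y \<in> lspan S"
  shows "vadd (vscale a x) (vscale b y) \<in> lspan S"
proof -
  obtain c d where "x = (\<lambda>n. \<Sum>s\<in>S. c s * s n)" "y = (\<lambda>n. \<Sum>s\<in>S. d s * s n)"
    using assms by (auto simp: lspan_def)
  then have "vadd (vscale a x) (vscale b y) = (\<lambda>n. \<Sum>s\<in>S. (a * c s + b * d s) * s n)"
    by (simp add: vadd_def vscale_def sum_distrib_left sum.distrib algebra_simps)
  then show ?thesis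
    by (auto simp: lspan_def)
qed

lemma lspan_mono_insert: "finite S \<Longrightarrow> a \<notin> S \<Longrightarrow> z \<in> lspan S \<Longrightarrow> z \<in> lspan (insert a S)"
  using lspan_insert[of S a] by (force simp: vadd_def vscale_def)

lemma finite_orthogonal_decomposition:
  assumes "finite S" "S \<subseteq> ell2" "x \<in> ell2"
  shows "\<exists>s\<in>lspan S. \<forall>t\<in>S. l2inner t (vsub x s) = 0"
  using assms
proof (induction S arbitrary: x rule: finite_induct)
  case empty
  then show ?case
    by (simp add: lspan_empty)
next
  case (insert a S)
  have a: "a \<in> ell2" and S: "S \<subseteq> ell2"
    using insert.prems by auto
  obtain \<sigma> where \<sigma>: "\<sigma> \<in> lspan S" "\<forall>t\<in>S. l2inner t (vsub a \<sigma>) = 0"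
    using insert.IH[OF S a] by blast
  obtain s where s: "s \<in> lspan S" "\<forall>t\<in>S. l2inner t (vsub x s) = 0"
    using insert.IH[OF S insert.prems(2)] by blast
  have ell2: "\<sigma> \<in> ell2" "s \<in> ell2" "vsub a \<sigma> \<in> ell2" "vsub x s \<in> ell2"
    using lspan_ell2[OF insert.hyps(1) S] \<sigma> s a insert.prems by (auto intro: ell2_sub)
  define t where "t = vsub a \<sigma>"
  show ?case
  proof (cases "t = (\<lambda>n. 0)")
    case True
    then have "a = \<sigma>"
      by (simp add: t_def vsub_def fun_eq_iff)
    then have "l2inner a (vsub x s) = 0"
      using lspan_orthogonal[OF insert.hyps(1) S ell2(4)] s(2) \<sigma>(1) by blast
    then show ?thesis
      using s lspan_mono_insert[OF insert.hyps(1,2) s(1)] by blast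
  next
    case False
    define \<beta> where "\<beta> = l2inner t (vsub x s) / complex_of_real (l2normsq t)"
    define s' where "s' = vadd (vscale \<beta> a) (vsub s (vscale \<beta> \<sigma>))"
    have "vsub s (vscale \<beta> \<sigma>) = vadd (vscale 1 s) (vscale (- \<beta>) \<sigma>)"
      by (simp add: vadd_def vsub_def vscale_def)
    then have "vsub s (vscale \<beta> \<sigma>) \<in> lspan S"
      using lspan_comb[OF s(1) \<sigma>(1)] by simp
    then have s': "s' \<in> lspan (insert a S)"
      unfolding s'_def lspan_insert[OF insert.hyps(1,2)] by blast
    have residual: "vsub x s' = remove_component t (vsub x s)"
      by (simp add: s'_def remove_component_def \<beta>_def t_def vadd_def vsub_def vscale_def
          algebra_simps diff_divide_distrib)
    have "t \<in> ell2"
      using ell2 by (simp add: t_def)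
    then have orth_t: "l2inner t (vsub x s') = 0"
      using residual remove_component_orthogonal[OF _ False ell2(4)] by simp
    have orth_S: "l2inner u (vsub x s') = 0" if "u \<in> S" for u
      using that s(2) \<sigma>(2) S ell2 \<open>t \<in> ell2\<close>
      by (simp add: residual remove_component_def t_def l2inner_diff_right l2inner_scale_right subset_iff ell2_scale)
    have "vsub x s' \<in> ell2"
      using residual remove_component_in[OF \<open>t \<in> ell2\<close> ell2(4)] by simp
    then have "l2inner \<sigma> (vsub x s') = 0"
      using lspan_orthogonal[OF insert.hyps(1) S _ orth_S \<sigma>(1)] by blast
    moreover have "a = vadd t \<sigma>"
      by (simp add: t_def vadd_def vsub_def)
    ultimately have "l2inner a (vsub x s') = 0"
      using orth_t l2inner_add_left[OF \<open>t \<in> ell2\<close> ell2(1) \<open>vsub x s' \<in> ell2\<close>] by simp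
    then show ?thesis
      using s' orth_S orth_t by auto
  qed
qed

lemma remove_component_linear:
  assumes b: "b \<in> ell2"
  shows "linear_op (remove_component b)"
  unfolding linear_op_def
proof (intro conjI ballI allI)
  show "remove_component b x \<in> ell2" if "x \<in> ell2" for x
    using b that by (rule remove_component_in)
  fix x y \<alpha> \<beta>
  assume "x \<in> ell2" "y \<in> ell2"
  then have "l2inner b (vadd (vscale \<alpha> x) (vscale \<beta> y)) = \<alpha> * l2inner b x + \<beta> * l2inner b y"
    using b by (simp add: l2inner_add_right l2inner_scale_right ell2_scale)
  then show "remove_component b (vadd (vscale \<alpha> x) (vscale \<beta> y)) =
      vadd (vscale \<alpha> (remove_component b x)) (vscale \<beta> (remove_component b y))"
    by (simp add: remove_component_def vadd_def vsub_def vscale_def algebra_simps add_divide_distrib)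
qed

lemma remove_component_self:
  assumes "b \<in> ell2" "b \<noteq> (\<lambda>n. 0)"
  shows "remove_component b (vscale \<alpha> b) = (\<lambda>n. 0)"
proof -
  have "l2inner b (vscale \<alpha> b) = \<alpha> * complex_of_real (l2normsq b)"
    using assms by (simp add: l2inner_scale_right l2inner_self)
  then show ?thesis
    using assms l2normsq_eq_0_iff[OF assms(1)] by (simp add: remove_component_def vsub_def vscale_def)
qed

lemma lspan_bounded_Cauchy_subseq:
  fixes z :: "nat \<Rightarrow> vec"
  assumes "finite S" "S \<subseteq> ell2" "linear_op L" "\<And>k. z k \<in> lspan S" "\<And>k. l2norm (L (z k)) \<le> M"
  shows "\<exists>r. strict_mono r \<and> l2_Cauchy (\<lambda>k. L (z (r k)))"
  using assms
proof (induction S arbitrary: L z rule: finite_induct)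
  case empty
  then have "L (z k) = (\<lambda>n. 0)" for k
    by (simp add: lspan_empty linear_op_zero)
  then show ?case
    using l2_Cauchy_const[OF ell2_zero] strict_mono_id by auto
next
  case (insert a S)
  have a: "a \<in> ell2" and S: "S \<subseteq> ell2"
    using insert.prems by auto
  have "\<forall>k. \<exists>\<alpha> w. w \<in> lspan S \<and> z k = vadd (vscale \<alpha> a) w"
    using insert.prems(3) unfolding lspan_insert[OF insert.hyps(1,2)] by blast
  then obtain \<alpha> w where w: "\<And>k. w k \<in> lspan S" "\<And>k. z k = vadd (vscale (\<alpha> k) a) (w k)"
    by metis
  have w_ell2: "w k \<in> ell2" for k
    using lspan_ell2[OF insert.hyps(1) S] w(1) by blast
  define b where "b = L a"
  have b: "b \<in> ell2"
    using insert.prems(2) a by (simp add: b_def linear_op_in)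
  have Lz: "L (z k) = vadd (vscale (\<alpha> k) b) (L (w k))" for k
    using insert.prems(2) a w_ell2 by (simp add: w(2) b_def linear_op_add linear_op_scale ell2_scale)
  show ?case
  proof (cases "b = (\<lambda>n. 0)")
    case True
    then have "L (z k) = L (w k)" for k
      by (simp add: Lz vadd_def vscale_def)
    then show ?thesis
      using insert.IH[OF S insert.prems(2) w(1)] insert.prems(4) by simp
  next
    case False
    define L' where "L' y = remove_component b (L y)" for y
    have L': "linear_op L'"
      unfolding L'_def using insert.prems(2) remove_component_linear[OF b] by (rule linear_op_compose[rotated])
    have Lz_ell2: "L (z k) \<in> ell2" for k
      using lspan_ell2[OF _ insert.prems(1)] insert.hyps(1) insert.prems(2,3) by (auto intro: linear_op_in)
    have L'w: "L' (w k) = remove_component b (L (z k))" for k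
    proof -
      have "remove_component b (L (z k)) =
          vadd (remove_component b (vscale (\<alpha> k) b)) (remove_component b (L (w k)))"
        unfolding Lz using b insert.prems(2) w_ell2
        by (simp add: linear_op_add[OF remove_component_linear[OF b]] ell2_scale linear_op_in)
      then show ?thesis
        using remove_component_self[OF b False] by (simp add: L'_def vadd_def)
    qed
    have "l2norm (L' (w k)) \<le> M" for k
      using remove_component_norm_le[OF b False Lz_ell2] insert.prems(4)[of k] L'w by (metis order_trans)
    then obtain r1 where r1: "strict_mono r1" "l2_Cauchy (\<lambda>k. L' (w (r1 k)))"
      using insert.IH[OF S L', of w] w(1) by blast
    define \<beta> where "\<beta> k = l2inner b (L (z k)) / complex_of_real (l2normsq b)" for k
    have "cmod (\<beta> k) \<le> l2norm b * M / l2normsq b" for k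
    proof -
      have "cmod (l2inner b (L (z k))) \<le> l2norm b * M"
        using l2inner_cauchy_schwarz[OF b Lz_ell2] insert.prems(4)[of k] l2norm_nonneg[OF b]
        by (meson mult_left_mono order_trans)
      then show ?thesis
        using l2normsq_nonneg[OF b] by (simp add: \<beta>_def norm_divide divide_right_mono)
    qed
    then have "bounded (range (\<lambda>k. \<beta> (r1 k)))"
      unfolding bounded_iff by blast
    then obtain l r2 where r2: "strict_mono r2" "(\<lambda>k. \<beta> (r1 (r2 k))) \<longlonglongrightarrow> l"
      using bounded_imp_convergent_subsequence by (fastforce simp: o_def)
    have "L (z k) = vadd (L' (w k)) (vscale (\<beta> k) b)" for k
      by (simp add: L'w \<beta>_def remove_component_def vadd_def vsub_def vscale_def)
    then have "l2_Cauchy (\<lambda>k. L (z (r1 (r2 k))))"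
      using l2_Cauchy_add[OF l2_Cauchy_subseq[OF r1(2) r2(1)] l2_Cauchy_scale_convergent[OF r2(2) b]] by simp
    moreover have "strict_mono (\<lambda>k. r1 (r2 k))"
      using strict_mono_o[OF r1(1) r2(1)] by (simp add: o_def)
    ultimately show ?thesis
      by blast
  qed
qed

lemma closed_subspace_orth_proj_range:
  assumes P: "orth_proj P"
  shows "closed_subspace (P ` ell2)"
  unfolding closed_subspace_def
proof (intro conjI allI ballI impI)
  show "P ` ell2 \<subseteq> ell2" "(\<lambda>n. 0) \<in> P ` ell2"
    using P linear_op_zero[OF orth_proj_linear[OF P]] by (auto simp: orth_proj_in intro: image_eqI[OF sym])
  show "vadd (vscale a x) (vscale b y) \<in> P ` ell2" if "x \<in> P ` ell2" "y \<in> P ` ell2" for x y a b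
    using that P by (auto simp: orth_proj_range_iff linear_op_comb orth_proj_linear ell2_add ell2_scale)
  fix xs :: "nat \<Rightarrow> vec" and x
  assume "(\<forall>k. xs k \<in> P ` ell2) \<and> x \<in> ell2 \<and> (\<lambda>k. l2norm (vsub (xs k) x)) \<longlonglongrightarrow> 0"
  then have xs: "\<And>k. xs k \<in> ell2" "\<And>k. P (xs k) = xs k" and x: "x \<in> ell2"
    and lim: "(\<lambda>k. l2norm (vsub (xs k) x)) \<longlonglongrightarrow> 0"
    using orth_proj_range_iff[OF P] by auto
  have bound: "l2norm (vsub (P x) x) \<le> 2 * l2norm (vsub (xs k) x)" for k
  proof -
    have "vsub (P x) (xs k) = P (vsub x (xs k))"
      using P x xs by (simp add: linear_op_diff orth_proj_linear)
    then have "l2norm (vsub (P x) (xs k)) \<le> l2norm (vsub (xs k) x)"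
      using orth_proj_norm_le(1)[OF P ell2_sub[OF x xs(1)]] l2norm_diff_commute[OF x xs(1)] by simp
    then show ?thesis
      using l2norm_diff_triangle[OF orth_proj_in[OF P x] xs(1) x, of k] by simp
  qed
  have "(\<lambda>k. 2 * l2norm (vsub (xs k) x)) \<longlonglongrightarrow> 0"
    using lim by (rule tendsto_mult_right_zero)
  then have "l2norm (vsub (P x) x) \<le> 0"
    by (rule LIMSEQ_le_const) (use bound in blast)
  then have "vsub (P x) x = (\<lambda>n. 0)"
    using l2norm_nonneg l2norm_eq_0_iff P x by (meson ell2_sub orth_proj_in order_antisym)
  then show "x \<in> P ` ell2"
    using P x by (simp add: orth_proj_range_iff vsub_def fun_eq_iff)
qed

lemma closed_subspace_orthogonal:
  assumes E: "closed_subspace E" and S: "S \<subseteq> ell2"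
  shows "closed_subspace {v \<in> E. \<forall>t\<in>S. l2inner t v = 0}"
  unfolding closed_subspace_def
proof (intro conjI allI ballI impI)
  show "{v \<in> E. \<forall>t\<in>S. l2inner t v = 0} \<subseteq> ell2" "(\<lambda>n. 0) \<in> {v \<in> E. \<forall>t\<in>S. l2inner t v = 0}"
    using E closed_subspace_subset closed_subspace_zero by auto
  show "vadd (vscale a x) (vscale b y) \<in> {v \<in> E. \<forall>t\<in>S. l2inner t v = 0}"
    if "x \<in> {v \<in> E. \<forall>t\<in>S. l2inner t v = 0}" "y \<in> {v \<in> E. \<forall>t\<in>S. l2inner t v = 0}" for x y a b
    using that E S closed_subspace_subset[OF E]
    by (auto simp: closed_subspace_comb l2inner_add_right l2inner_scale_right ell2_scale subset_iff)
  fix xs :: "nat \<Rightarrow> vec" and x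
  assume "(\<forall>k. xs k \<in> {v \<in> E. \<forall>t\<in>S. l2inner t v = 0}) \<and> x \<in> ell2 \<and> (\<lambda>k. l2norm (vsub (xs k) x)) \<longlonglongrightarrow> 0"
  then have xs: "\<And>k. xs k \<in> E" "\<And>k t. t \<in> S \<Longrightarrow> l2inner t (xs k) = 0" and x: "x \<in> ell2"
    and lim: "(\<lambda>k. l2norm (vsub (xs k) x)) \<longlonglongrightarrow> 0"
    by auto
  have xs_ell2: "xs k \<in> ell2" for k
    using xs(1) closed_subspace_subset[OF E] by blast
  have "l2inner t x = 0" if t: "t \<in> S" for t
  proof -
    have bound: "cmod (l2inner t x) \<le> l2norm t * l2norm (vsub (xs k) x)" for k
    proof -
      have "l2inner t x = - l2inner t (vsub (xs k) x)"
        using xs(2)[OF t] t S x xs_ell2 by (auto simp: l2inner_diff_right)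
      then show ?thesis
        using l2inner_cauchy_schwarz[of t "vsub (xs k) x"] t S x xs_ell2 by (auto simp: ell2_sub)
    qed
    have "(\<lambda>k. l2norm t * l2norm (vsub (xs k) x)) \<longlonglongrightarrow> 0"
      using lim by (rule tendsto_mult_right_zero)
    then have "cmod (l2inner t x) \<le> 0"
      by (rule LIMSEQ_le_const) (use bound in blast)
    then show ?thesis
      by simp
  qed
  then show "x \<in> {v \<in> E. \<forall>t\<in>S. l2inner t v = 0}"
    using closed_subspace_limit[OF E xs(1) x lim] by blast
qed

lemma fin_codim_in_orthogonal:
  assumes E: "closed_subspace E" and S: "finite S" "S \<subseteq> E"
  shows "fin_codim_in {v \<in> E. \<forall>t\<in>S. l2inner t v = 0} E"
  unfolding fin_codim_in_def
proof (intro exI conjI)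
  have S_ell2: "S \<subseteq> ell2"
    using S closed_subspace_subset[OF E] by blast
  have span: "lspan S \<subseteq> E"
    using E S by (rule lspan_closed_subspace)
  show "E = {vadd x y |x y. x \<in> {v \<in> E. \<forall>t\<in>S. l2inner t v = 0} \<and> y \<in> lspan S}"
  proof (intro equalityI subsetI)
    fix v
    assume v: "v \<in> E"
    then obtain s where s: "s \<in> lspan S" "\<forall>t\<in>S. l2inner t (vsub v s) = 0"
      using finite_orthogonal_decomposition[OF S(1) S_ell2] closed_subspace_subset[OF E] by blast
    moreover have "vsub v s \<in> E"
      using E v s(1) span by (auto intro: closed_subspace_diff)
    moreover have "v = vadd (vsub v s) s"
      by (simp add: vadd_def vsub_def)
    ultimately show "v \<in> {vadd x y |x y. x \<in> {v \<in> E. \<forall>t\<in>S. l2inner t v = 0} \<and> y \<in> lspan S}"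
      by blast
  qed (use E span in \<open>auto intro: closed_subspace_add\<close>)
qed (use S in auto)

lemma calkin_le_estimate:
  assumes P: "orth_proj P" and Q: "orth_proj Q"
    and C: "bounded_op C" "bounded_op Cs" "adjoint_of Cs C"
    and y: "y \<in> ell2" "P y = y"
  shows "l2normsq (compl_proj Q y) \<le> l2norm y * l2norm (vsub (vsub (Q y) (P y)) (Cs (C y)))"
proof -
  define K where "K = vsub (vsub (Q y) (P y)) (Cs (C y))"
  have ell2: "Q y \<in> ell2" "C y \<in> ell2" "Cs (C y) \<in> ell2" "K \<in> ell2"
    using P Q C y by (simp_all add: K_def orth_proj_in bounded_op_in ell2_sub)
  have "l2inner y K = l2inner y (Q y) - l2inner y y - l2inner y (Cs (C y))"
    using y ell2 by (simp add: K_def l2inner_diff_right ell2_sub)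
  also have "\<dots> = l2inner (Q y) (Q y) - l2inner y y - l2inner (C y) (C y)"
  proof -
    have "l2inner (Q y) (Q y) = l2inner y (Q y)"
      using orth_proj_self_adjoint[OF Q y(1) ell2(1)] orth_proj_idem[OF Q y(1)] by simp
    moreover have "l2inner (C y) (C y) = l2inner y (Cs (C y))"
      using C(3) y(1) ell2(2) by (simp add: adjoint_of_def)
    ultimately show ?thesis
      by simp
  qed
  also have "\<dots> = complex_of_real (- (l2normsq (compl_proj Q y) + l2normsq (C y)))"
    using orth_proj_pythagoras[OF Q y(1)] y ell2 by (simp add: l2inner_self compl_proj_def)
  finally have "cmod (l2inner y K) = \<bar>- (l2normsq (compl_proj Q y) + l2normsq (C y))\<bar>"
    by (simp only: norm_of_real)
  then have "l2normsq (compl_proj Q y) + l2normsq (C y) = cmod (l2inner y K)"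
    using l2normsq_nonneg[OF ell2(2)] l2normsq_nonneg[OF ell2_sub[OF y(1) ell2(1)]]
    by (simp add: compl_proj_def)
  also have "\<dots> \<le> l2norm y * l2norm K"
    using y(1) ell2(4) by (rule l2inner_cauchy_schwarz)
  finally show ?thesis
    using l2normsq_nonneg[OF ell2(2)] by (simp add: K_def)
qed

lemma precompact_compl_proj_if_calkin_le:
  assumes P: "orth_proj P" and Q: "orth_proj Q" and "calkin_le P Q"
  shows "precompact_op (\<lambda>x. compl_proj Q (P x))"
proof -
  obtain C Cs where C: "bounded_op C" "bounded_op Cs" "adjoint_of Cs C"
    and compact: "compact_op (\<lambda>x. vsub (vsub (Q x) (P x)) (Cs (C x)))"
    using assms(3) unfolding calkin_le_def by blast
  define K where "K x = vsub (vsub (Q x) (P x)) (Cs (C x))" for x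
  have K: "bounded_op K"
    unfolding K_def[abs_def]
    using bounded_op_sub[OF bounded_op_sub[OF orth_proj_bounded[OF Q] orth_proj_bounded[OF P]]
        bounded_op_compose[OF C(2) C(1)]] .
  have "precompact_op K"
    using compact compact_op_iff_precompact_op[OF K] unfolding K_def[abs_def] by blast
  show ?thesis
  proof (rule precompact_op_dominated)
    show "linear_op (\<lambda>x. compl_proj Q (P x))"
      by (rule linear_op_compose[OF orth_proj_linear[OF orth_proj_compl_proj[OF Q]] orth_proj_linear[OF P]])
    show "precompact_op (\<lambda>x. K (P x))"
      by (rule precompact_op_compose_bounded[OF \<open>precompact_op K\<close> orth_proj_bounded[OF P]])
    show "linear_op (\<lambda>x. K (P x))"
      by (rule linear_op_compose[OF bounded_op_imp_linear_op[OF K] orth_proj_linear[OF P]])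
    fix z
    assume z: "z \<in> ell2"
    have "l2normsq (compl_proj Q (P z)) \<le> l2norm (P z) * l2norm (K (P z))"
      using calkin_le_estimate[OF P Q C orth_proj_in[OF P z] orth_proj_idem[OF P z]] by (simp add: K_def)
    also have "\<dots> \<le> l2norm z * l2norm (K (P z))"
      using orth_proj_norm_le(1)[OF P z] by (simp add: mult_right_mono l2norm_nonneg bounded_op_in[OF K] orth_proj_in[OF P z])
    finally show "l2normsq (compl_proj Q (P z)) \<le> l2norm z * l2norm (K (P z))" .
  qed
qed

lemma not_l2_Cauchy_if_separated:
  assumes "0 < e" and sep: "\<And>i k. i < k \<Longrightarrow> e \<le> l2norm (vsub (f k) (f i))" and r: "strict_mono r"
  shows "\<not> l2_Cauchy (\<lambda>k. f (r k))"
proof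
  assume "l2_Cauchy (\<lambda>k. f (r k))"
  then obtain N where "\<forall>m\<ge>N. \<forall>n\<ge>N. l2norm (vsub (f (r m)) (f (r n))) < e"
    using \<open>0 < e\<close> unfolding l2_Cauchy_iff by blast
  then have "l2norm (vsub (f (r (Suc N))) (f (r N))) < e"
    by simp
  moreover have "e \<le> l2norm (vsub (f (r (Suc N))) (f (r N)))"
    using r by (intro sep) (simp add: strict_mono_Suc_iff)
  ultimately show False
    by simp
qed

lemma orthogonal_sequence_if_not_ess_contained:
  assumes P: "orth_proj P" and Q: "orth_proj Q" and not_ess: "\<not> ess_contained (P ` ell2) (Q ` ell2)"
  obtains e :: real and u :: "nat \<Rightarrow> vec" where "0 < e" "\<And>k. u k \<in> P ` ell2" "\<And>k. l2norm (u k) = 1"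
    "\<And>k. e < l2norm (compl_proj Q (u k))"
    "\<And>i k. i < k \<Longrightarrow> l2inner (compl_proj Q (u i)) (compl_proj Q (u k)) = 0"
proof -
  obtain e where e: "0 < e" and far: "\<And>E0. closed_subspace E0 \<Longrightarrow> E0 \<subseteq> P ` ell2 \<Longrightarrow>
      fin_codim_in E0 (P ` ell2) \<Longrightarrow> \<exists>v\<in>E0. l2norm v = 1 \<and> e < l2dist v (Q ` ell2)"
    using not_ess unfolding ess_contained_def by force
  define good where "good S v \<longleftrightarrow> v \<in> P ` ell2 \<and> (\<forall>t\<in>S. l2inner t v = 0) \<and> l2norm v = 1 \<and>
    e < l2norm (compl_proj Q v)" for S v
  have good_ex: "\<exists>v. good S v" if S: "finite S" "S \<subseteq> P ` ell2" for S
  proof -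
    have range: "closed_subspace (P ` ell2)"
      using P by (rule closed_subspace_orth_proj_range)
    have "closed_subspace {v \<in> P ` ell2. \<forall>t\<in>S. l2inner t v = 0}"
      using closed_subspace_orthogonal[OF range] S closed_subspace_subset[OF range] by blast
    then obtain v where "v \<in> {v \<in> P ` ell2. \<forall>t\<in>S. l2inner t v = 0}" "l2norm v = 1"
      "e < l2dist v (Q ` ell2)"
      using far[OF _ _ fin_codim_in_orthogonal[OF range S]] by blast
    then show ?thesis
      using l2dist_orth_proj_range[OF Q] orth_proj_range_iff[OF P] by (auto simp: good_def)
  qed
  define h where "h v = P (compl_proj Q v)" for v
  have "\<exists>u :: nat \<Rightarrow> vec. \<forall>k. good (h ` u ` {..<k}) (u k)"
  proof (rule dependent_wellorder_choice[where P="\<lambda>f k v. good (h ` f ` {..<k}) v"])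
    show "good (h ` f ` {..<k}) v = good (h ` g ` {..<k}) v"
      if "\<And>i. i < k \<Longrightarrow> f i = g i" for v f g and k :: nat
      using that by (simp add: image_def)
    show "\<exists>v. good (h ` f ` {..<k}) v" if "\<And>i. i < k \<Longrightarrow> good (h ` f ` {..<i}) (f i)" for f and k :: nat
      using that P Q by (intro good_ex) (auto simp: good_def h_def orth_proj_range_iff orth_proj_in
          orth_proj_idem orth_proj_compl_proj)
  qed
  then obtain u :: "nat \<Rightarrow> vec" where u: "\<And>k. good (h ` u ` {..<k}) (u k)"
    by blast
  have ell2: "u k \<in> ell2" "compl_proj Q (u k) \<in> ell2" for k
    using u[of k] P Q by (auto simp: good_def orth_proj_range_iff orth_proj_in orth_proj_compl_proj)
  have orth: "l2inner (compl_proj Q (u i)) (compl_proj Q (u k)) = 0" if "i < k" for i k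
  proof -
    have "l2inner (h (u i)) (u k) = 0"
      using u[of k] that by (auto simp: good_def)
    moreover have "l2inner (h (u i)) (u k) = l2inner (compl_proj Q (u i)) (u k)"
      using u[of k] P ell2 by (simp add: h_def good_def orth_proj_self_adjoint orth_proj_range_iff)
    moreover have "l2inner (compl_proj Q (u i)) (compl_proj Q (u k)) = l2inner (compl_proj Q (u i)) (u k)"
      using orth_proj_compl_proj[OF Q] ell2
      by (metis orth_proj_idem orth_proj_self_adjoint)
    ultimately show ?thesis
      by simp
  qed
  show thesis
    by (rule that[OF e, of u]) (use u orth in \<open>auto simp: good_def\<close>)
qed

lemma ess_contained_if_precompact:
  assumes P: "orth_proj P" and Q: "orth_proj Q" and compact: "precompact_op (\<lambda>x. compl_proj Q (P x))"
  shows "ess_contained (P ` ell2) (Q ` ell2)"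
proof (rule ccontr)
  assume "\<not> ess_contained (P ` ell2) (Q ` ell2)"
  then obtain e :: real and u :: "nat \<Rightarrow> vec" where e: "0 < e" and u: "\<And>k. u k \<in> P ` ell2" "\<And>k. l2norm (u k) = 1"
    and far: "\<And>k. e < l2norm (compl_proj Q (u k))"
    and orth: "\<And>i k. i < k \<Longrightarrow> l2inner (compl_proj Q (u i)) (compl_proj Q (u k)) = 0"
    using orthogonal_sequence_if_not_ess_contained[OF P Q] by blast
  have Pu: "u k \<in> ell2" "P (u k) = u k" for k
    using u(1) orth_proj_range_iff[OF P] by auto
  have ell2: "compl_proj Q (u k) \<in> ell2" for k
    using Pu Q by (simp add: orth_proj_in orth_proj_compl_proj)
  have sep: "e \<le> l2norm (vsub (compl_proj Q (u k)) (compl_proj Q (u i)))" if "i < k" for i k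
  proof -
    have "l2normsq (vsub (compl_proj Q (u k)) (compl_proj Q (u i))) =
        l2normsq (compl_proj Q (u k)) + l2normsq (compl_proj Q (u i))"
      using orth[OF that] l2inner_commute[OF ell2 ell2, of i k] ell2 by (simp add: l2normsq_diff)
    moreover have "e\<^sup>2 < l2normsq (compl_proj Q (u k))"
      using far[of k] e l2norm_squared[OF ell2] by (metis less_imp_le power_strict_mono zero_less_numeral)
    ultimately have "e\<^sup>2 \<le> l2normsq (vsub (compl_proj Q (u k)) (compl_proj Q (u i)))"
      using l2normsq_nonneg[OF ell2, of i] by simp
    then show ?thesis
      by (simp add: l2norm_eq_sqrt real_le_rsqrt)
  qed
  obtain r where "strict_mono r" "l2_Cauchy (\<lambda>k. compl_proj Q (P (u (r k))))"
    using precompact_opD[OF compact, of u 1] Pu u(2) by auto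
  then show False
    using not_l2_Cauchy_if_separated[of e "\<lambda>k. compl_proj Q (u k)", OF e sep] Pu(2) by simp
qed

lemma ess_contained_compl_proj_small:
  assumes Q: "orth_proj Q" and ess: "ess_contained E (Q ` ell2)" and e: "0 < e"
  obtains E0 where "closed_subspace E0" "E0 \<subseteq> E" "fin_codim_in E0 E"
    "\<And>v. v \<in> E0 \<Longrightarrow> l2norm (compl_proj Q v) \<le> e * l2norm v"
proof -
  obtain E0 where E0: "closed_subspace E0" "E0 \<subseteq> E" "fin_codim_in E0 E"
    and unit: "\<And>v. v \<in> E0 \<Longrightarrow> l2norm v = 1 \<Longrightarrow> l2dist v (Q ` ell2) \<le> e"
    using ess e unfolding ess_contained_def by blast
  have "l2norm (compl_proj Q v) \<le> e * l2norm v" if v: "v \<in> E0" for v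
  proof (cases "v = (\<lambda>n. 0)")
    case True
    then show ?thesis
      using linear_op_zero[OF orth_proj_linear[OF orth_proj_compl_proj[OF Q]]] by simp
  next
    case False
    have v_ell2: "v \<in> ell2"
      using v closed_subspace_subset[OF E0(1)] by blast
    define c where "c = l2norm v"
    have c: "0 < c"
      using False v_ell2 l2norm_nonneg l2norm_eq_0_iff by (metis c_def order_less_le)
    define w where "w = vscale (complex_of_real (1 / c)) v"
    have w: "w \<in> E0" "l2norm w = 1"
      using E0(1) v v_ell2 c by (simp_all add: w_def closed_subspace_scale l2norm_scale norm_divide c_def)
    then have "w \<in> ell2"
      using closed_subspace_subset[OF E0(1)] by blast
    then have "l2norm (compl_proj Q w) \<le> e"
      using unit[OF w] l2dist_orth_proj_range[OF Q] by simp
    moreover have "compl_proj Q w = vscale (complex_of_real (1 / c)) (compl_proj Q v)"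
      unfolding w_def using v_ell2 by (rule linear_op_scale[OF orth_proj_linear[OF orth_proj_compl_proj[OF Q]]])
    ultimately have "l2norm (compl_proj Q v) / c \<le> e"
      using v_ell2 c Q by (simp add: l2norm_scale norm_divide orth_proj_in orth_proj_compl_proj)
    then show ?thesis
      using c by (simp add: c_def divide_le_eq mult.commute)
  qed
  then show thesis
    using that[OF E0] by blast
qed

lemma compl_proj_split_bound:
  assumes Q: "orth_proj Q" and R: "orth_proj R" and "0 \<le> e"
    and small: "\<And>v. v \<in> R ` ell2 \<Longrightarrow> l2norm (compl_proj Q v) \<le> e * l2norm v"
    and y: "y \<in> ell2" "l2norm y \<le> 1" and y': "y' \<in> ell2" "l2norm y' \<le> 1"
  shows "l2norm (vsub (compl_proj Q y) (compl_proj Q y')) \<le> 2 * e + l2norm (vsub (compl_proj R y) (compl_proj R y'))"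
proof -
  define d where "d = vsub y y'"
  have d: "d \<in> ell2" "l2norm d \<le> 2"
    using y y' l2norm_diff_le[OF y(1) y'(1)] by (simp_all add: d_def ell2_sub)
  have lin: "linear_op (compl_proj Q)" "linear_op (compl_proj R)"
    using Q R by (simp_all add: orth_proj_linear orth_proj_compl_proj)
  have ell2: "R d \<in> ell2" "compl_proj R d \<in> ell2"
    using R d by (simp_all add: orth_proj_in orth_proj_compl_proj)
  have "vsub (compl_proj Q y) (compl_proj Q y') = vadd (compl_proj Q (R d)) (compl_proj Q (compl_proj R d))"
  proof -
    have "vadd (R d) (compl_proj R d) = d"
      by (simp add: compl_proj_def vadd_def vsub_def)
    then have "compl_proj Q d = vadd (compl_proj Q (R d)) (compl_proj Q (compl_proj R d))"
      using linear_op_add[OF lin(1) ell2] by simp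
    then show ?thesis
      using linear_op_diff[OF lin(1) y(1) y'(1)] by (simp add: d_def)
  qed
  then have "l2norm (vsub (compl_proj Q y) (compl_proj Q y')) \<le>
      l2norm (compl_proj Q (R d)) + l2norm (compl_proj Q (compl_proj R d))"
    using l2norm_triangle lin ell2 by (simp add: linear_op_in)
  also have "l2norm (compl_proj Q (R d)) \<le> 2 * e"
  proof -
    have "l2norm (compl_proj Q (R d)) \<le> e * l2norm (R d)"
      using small d(1) by blast
    also have "\<dots> \<le> e * 2"
      using orth_proj_norm_le(1)[OF R d(1)] d(2) \<open>0 \<le> e\<close> by (simp add: mult_left_mono)
    finally show ?thesis
      by simp
  qed
  also have "l2norm (compl_proj Q (compl_proj R d)) \<le> l2norm (compl_proj R d)"
    using orth_proj_norm_le(2)[OF Q ell2(2)] by (simp add: compl_proj_def)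
  also have "compl_proj R d = vsub (compl_proj R y) (compl_proj R y')"
    using linear_op_diff[OF lin(2) y(1) y'(1)] by (simp add: d_def)
  finally show ?thesis
    by simp
qed

lemma fin_codim_compl_proj_Cauchy_subseq:
  fixes ys :: "nat \<Rightarrow> vec"
  assumes E0: "closed_subspace E0" "fin_codim_in E0 E" and E: "E \<subseteq> ell2"
    and ys: "\<And>k. ys k \<in> E" "\<And>k. l2norm (ys k) \<le> M"
  shows "\<exists>r. strict_mono r \<and> l2_Cauchy (\<lambda>k. compl_proj (subspace_proj E0) (ys (r k)))"
proof -
  obtain S where S: "finite S" "S \<subseteq> E" and dec: "E = {vadd x y |x y. x \<in> E0 \<and> y \<in> lspan S}"
    using E0(2) unfolding fin_codim_in_def by blast
  have S_ell2: "S \<subseteq> ell2"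
    using S(2) E by blast
  define R where "R = subspace_proj E0"
  have compl_R: "linear_op (compl_proj R)" "orth_proj (compl_proj R)"
    using orth_proj_subspace_proj[OF E0(1)] by (simp_all add: R_def orth_proj_linear orth_proj_compl_proj)
  have "\<forall>k. \<exists>a f. a \<in> E0 \<and> f \<in> lspan S \<and> ys k = vadd a f"
    using ys(1) unfolding dec by blast
  then obtain a f where af: "\<And>k. a k \<in> E0" "\<And>k. f k \<in> lspan S" "\<And>k. ys k = vadd (a k) (f k)"
    by metis
  have compl_R_ys: "compl_proj R (ys k) = compl_proj R (f k)" for k
  proof -
    have "a k \<in> ell2" "f k \<in> ell2"
      using af closed_subspace_subset[OF E0(1)] lspan_ell2[OF S(1) S_ell2] by blast+
    moreover have "compl_proj R (a k) = (\<lambda>n. 0)"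
      using subspace_proj_fixed[OF E0(1) af(1)] by (simp add: compl_proj_def R_def vsub_def)
    ultimately show ?thesis
      using linear_op_add[OF compl_R(1)] af(3) by (simp add: vadd_def)
  qed
  have bounded: "l2norm (compl_proj R (f k)) \<le> M" for k
  proof -
    have "l2norm (compl_proj R (ys k)) \<le> l2norm (ys k)"
      using ys(1) E by (intro orth_proj_norm_le(1)[OF compl_R(2)]) blast
    then show ?thesis
      using ys(2)[of k] compl_R_ys[of k] by simp
  qed
  then obtain r where "strict_mono r" "l2_Cauchy (\<lambda>k. compl_proj R (f (r k)))"
    using lspan_bounded_Cauchy_subseq[OF S(1) S_ell2 compl_R(1), of f M] af(2) by blast
  then show ?thesis
    unfolding R_def[symmetric] using compl_R_ys by auto
qed

lemma compl_proj_approx: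
  fixes xs :: "nat \<Rightarrow> vec"
  assumes P: "orth_proj P" and Q: "orth_proj Q" and ess: "ess_contained (P ` ell2) (Q ` ell2)"
    and e: "0 < e" and xs: "\<forall>k. xs k \<in> ell2 \<and> l2norm (xs k) \<le> 1"
  shows "\<exists>r. strict_mono r \<and> l2_eventually_close (3 * e) (\<lambda>k. compl_proj Q (P (xs (r k))))"
proof -
  obtain E0 where E0: "closed_subspace E0" "E0 \<subseteq> P ` ell2" "fin_codim_in E0 (P ` ell2)"
    and small: "\<And>v. v \<in> E0 \<Longrightarrow> l2norm (compl_proj Q v) \<le> e * l2norm v"
    using ess_contained_compl_proj_small[OF Q ess e] by blast
  define R where "R = subspace_proj E0"
  have R: "orth_proj R"
    unfolding R_def using E0(1) by (rule orth_proj_subspace_proj)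
  have small_R: "l2norm (compl_proj Q v) \<le> e * l2norm v" if "v \<in> R ` ell2" for v
    using that small subspace_proj(1)[OF E0(1)] by (auto simp: R_def)
  define ys where "ys k = P (xs k)" for k
  have ys: "ys k \<in> ell2" "l2norm (ys k) \<le> 1" for k
    using xs P orth_proj_norm_le(1)[OF P] by (auto simp: ys_def orth_proj_in intro: order_trans)
  have ys_range: "ys k \<in> P ` ell2" for k
    using xs by (simp add: ys_def)
  have range: "P ` ell2 \<subseteq> ell2"
    using orth_proj_in[OF P] by blast
  obtain r where r: "strict_mono r" "l2_Cauchy (\<lambda>k. compl_proj R (ys (r k)))"
    using fin_codim_compl_proj_Cauchy_subseq[where ys=ys and M=1, OF E0(1) E0(3) range ys_range ys(2)]
    unfolding R_def by blast
  then obtain N where N: "\<forall>i\<ge>N. \<forall>j\<ge>N. l2norm (vsub (compl_proj R (ys (r i))) (compl_proj R (ys (r j)))) \<le> e"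
    using e unfolding l2_Cauchy_iff_eventually_close l2_eventually_close_def by blast
  have "l2norm (vsub (compl_proj Q (ys (r i))) (compl_proj Q (ys (r j)))) \<le> 3 * e"
    if "N \<le> i" "N \<le> j" for i j
  proof -
    have "l2norm (vsub (compl_proj Q (ys (r i))) (compl_proj Q (ys (r j)))) \<le>
        2 * e + l2norm (vsub (compl_proj R (ys (r i))) (compl_proj R (ys (r j))))"
      using e by (intro compl_proj_split_bound[OF Q R _ small_R ys ys]) simp
    moreover have "l2norm (vsub (compl_proj R (ys (r i))) (compl_proj R (ys (r j)))) \<le> e"
      using N that by blast
    ultimately show ?thesis
      by simp
  qed
  then show ?thesis
    using r(1) unfolding ys_def l2_eventually_close_def by blast
qed

lemma precompact_compl_proj_if_ess_contained:
  assumes P: "orth_proj P" and Q: "orth_proj Q" and ess: "ess_contained (P ` ell2) (Q ` ell2)"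
  shows "precompact_op (\<lambda>x. compl_proj Q (P x))"
proof (rule precompact_op_approx)
  show "linear_op (\<lambda>x. compl_proj Q (P x))"
    by (rule linear_op_compose[OF orth_proj_linear[OF orth_proj_compl_proj[OF Q]] orth_proj_linear[OF P]])
  show "\<exists>r. strict_mono r \<and> l2_eventually_close e (\<lambda>k. compl_proj Q (P (xs (r k))))"
    if "0 < e" "\<forall>k. xs k \<in> ell2 \<and> l2norm (xs k) \<le> 1" for e and xs :: "nat \<Rightarrow> vec"
    using compl_proj_approx[OF P Q ess, of "e / 3" xs] that by simp
qed

lemma calkin_le_if_precompact_compl_proj:
  assumes P: "orth_proj P" and Q: "orth_proj Q" and T: "precompact_op (\<lambda>x. compl_proj Q (P x))"
  shows "calkin_le P Q"
proof -
  define C where "C x = vsub (Q x) (P x)" for x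
  have C: "bounded_op C"
    unfolding C_def[abs_def] by (rule bounded_op_sub[OF orth_proj_bounded[OF Q] orth_proj_bounded[OF P]])
  have C_adjoint: "adjoint_of C C"
    unfolding adjoint_of_def
  proof (intro ballI)
    fix x y
    assume "x \<in> ell2" "y \<in> ell2"
    then show "l2inner (C x) y = l2inner x (C y)"
      using orth_proj_self_adjoint[OF P] orth_proj_self_adjoint[OF Q] P Q
      by (simp add: C_def l2inner_diff_left l2inner_diff_right orth_proj_in)
  qed
  have "adjoint_of (\<lambda>x. P (compl_proj Q x)) (\<lambda>x. compl_proj Q (P x))"
    unfolding adjoint_of_def
  proof (intro ballI)
    fix x y
    assume x: "x \<in> ell2" and y: "y \<in> ell2"
    have "l2inner (compl_proj Q (P x)) y = l2inner (P x) (compl_proj Q y)"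
      using orth_proj_self_adjoint[OF orth_proj_compl_proj[OF Q] orth_proj_in[OF P x] y] .
    also have "\<dots> = l2inner x (P (compl_proj Q y))"
      using orth_proj_self_adjoint[OF P x orth_proj_in[OF orth_proj_compl_proj[OF Q] y]] .
    finally show "l2inner (compl_proj Q (P x)) y = l2inner x (P (compl_proj Q y))" .
  qed
  then have "precompact_op (\<lambda>x. P (compl_proj Q x))"
    by (rule precompact_op_adjoint[OF T
          linear_op_compose[OF orth_proj_linear[OF orth_proj_compl_proj[OF Q]] orth_proj_linear[OF P]]
          bounded_op_compose[OF orth_proj_bounded[OF P] orth_proj_bounded[OF orth_proj_compl_proj[OF Q]]]])
  then have "precompact_op (\<lambda>x. vsub (vscale (-1) (compl_proj Q (P x))) (P (compl_proj Q x)))"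
    by (rule precompact_op_sub[OF precompact_op_scale[OF T]])
  moreover have "vsub (vsub (Q x) (P x)) (C (C x)) = vsub (vscale (-1) (compl_proj Q (P x))) (P (compl_proj Q x))"
    if "x \<in> ell2" for x
  proof -
    have "C (C x) = vsub (vsub (Q x) (Q (P x))) (vsub (P (Q x)) (P x))"
      using P Q that by (simp add: C_def linear_op_diff orth_proj_linear orth_proj_in orth_proj_idem)
    moreover have "P (compl_proj Q x) = vsub (P x) (P (Q x))"
      using P Q that by (simp add: compl_proj_def linear_op_diff orth_proj_linear orth_proj_in)
    ultimately show ?thesis
      by (simp add: compl_proj_def C_def vsub_def vscale_def)
  qed
  ultimately have "precompact_op (\<lambda>x. vsub (vsub (Q x) (P x)) (C (C x)))"
    by (rule precompact_op_cong)
  moreover have "bounded_op (\<lambda>x. vsub (vsub (Q x) (P x)) (C (C x)))"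
    by (rule bounded_op_sub[OF bounded_op_sub[OF orth_proj_bounded[OF Q] orth_proj_bounded[OF P]]
          bounded_op_compose[OF C C]])
  ultimately have "compact_op (\<lambda>x. vsub (vsub (Q x) (P x)) (C (C x)))"
    using compact_op_iff_precompact_op by blast
  then show ?thesis
    unfolding calkin_le_def using C C_adjoint by blast
qed

theorem proposition3p3:
  fixes P Q :: "vec \<Rightarrow> vec"
  assumes "orth_proj P" and "orth_proj Q"
  shows "calkin_le P Q \<longleftrightarrow> ess_contained (P ` ell2) (Q ` ell2)"
proof -
  have "calkin_le P Q \<longleftrightarrow> precompact_op (\<lambda>x. compl_proj Q (P x))"
    using precompact_compl_proj_if_calkin_le calkin_le_if_precompact_compl_proj assms by blast
  also have "\<dots> \<longleftrightarrow> ess_contained (P ` ell2) (Q ` ell2)"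
    using ess_contained_if_precompact precompact_compl_proj_if_ess_contained assms by blast
  finally show ?thesis .
qed

end
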